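(* In the stochastic-context setting, let $\Omega=\{\boldsymbol{\omega}\in\Delta^K: T\cdot\boldsymbol{\omega}[i]\in\mathbb{N}\ \forall i\in[K]\}$ and, for $\boldsymbol{\omega}\in\Omega$, let $\pi^{(\boldsymbol{\omega})}(\mathbf{z})\in\arg\max_{\mathbf{x}\in\mathcal{E}_{\mathbf{z}}}\sum_{i=1}^K u(\mathbf{z},\mathbf{x},b_{\alpha^{(i)}}(\mathbf{z},\mathbf{x}))\,\boldsymbol{\omega}[i]$; let $\Pi=\{\pi^{(\boldsymbol{\omega})}\}_{\boldsymbol{\omega}\in\Omega}$. Consider the algorithm that runs Hedge over $\Pi$: initially $\mathbf{p}_1$ is uniform over $\Pi$; in round $t$ it samples $\pi_t\sim\mathbf{p}_t$ and plays $\mathbf{x}_t=\pi_t(\mathbf{z}_t)$, observes $f_t$, sets $\boldsymbol{\ell}_t[\pi]=-u(\mathbf{z}_t,\pi(\mathbf{z}_t),b_{f_t}(\mathbf{z}_t,\pi(\mathbf{z}_t)))$ for every $\pi\in\Pi$, and sets $\mathbf{p}_{t+1}[\pi]\propto\exp(-\eta\sum_{s=1}^t\boldsymbol{\ell}_s[\pi])$, with $\eta=\sqrt{\log|\Pi|/T}$. Then its expected contextual Stackelberg regret satisfies $\mathbb{E}[R(T)]=O\big(\sqrt{KT\log T}+K\big)$.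
   Context: Game: finite leader actions $\mathcal{A}$, finite follower actions $\mathcal{A}_f$, contexts $\mathcal{Z}\subseteq\mathbb{R}^d$, follower types $\alpha^{(1)},\ldots,\alpha^{(K)}$ ($K\le T$) with known utilities $u_{\alpha^{(i)}}:\mathcal{Z}\times\mathcal{A}\times\mathcal{A}_f\to[0,1]$, known leader utility $u:\mathcal{Z}\times\mathcal{A}\times\mathcal{A}_f\to[0,1]$, $u(\mathbf{z},\mathbf{x},a_f)=\sum_{a_l}\mathbf{x}[a_l]u(\mathbf{z},a_l,a_f)$ for $\mathbf{x}\in\Delta(\mathcal{A})$; best response $b_f(\mathbf{z},\mathbf{x})\in\arg\max_{a_f}\sum_{a_l}\mathbf{x}[a_l]u_f(\mathbf{z},a_l,a_f)$, ties broken by a fixed known ordering. Best-response regions $\mathcal{X}_{\mathbf{z}}(\sigma)=\{\mathbf{x}:b_{\alpha^{(i)}}(\mathbf{z},\mathbf{x})=\sigma(\alpha^{(i)})\ \forall i\}$. $\mathcal{E}_{\mathbf{z}}$ is a set of $\delta$-approximate extreme points with $\delta\le 1/T$: for every $\sigma$ with $\mathcal{X}_{\mathbf{z}}(\sigma)\neq\emptyset$ and every extreme point $\mathbf{x}$ of $\mathrm{cl}(\mathcal{X}_{\mathbf{z}}(\sigma))$, either $\mathbf{x}\in\mathcal{X}_{\mathbf{z}}(\sigma)$ and $\mathbf{x}\in\mathcal{E}_{\mathbf{z}}$, or some $\mathbf{x}'\in\mathcal{E}_{\mathbf{z}}\cap\mathcal{X}_{\mathbf{z}}(\sigma)$ has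 $\|\mathbf{x}'-\mathbf{x}\|_1\le\delta$. Stochastic-context setting: $\mathbf{z}_1,\ldots,\mathbf{z}_T$ i.i.d. from an unknown distribution $\mathcal{P}$; $f_t$ is chosen by a possibly adaptive adversary knowing $\mathcal{P}$, the algorithm and $\mathbf{z}_1,\ldots,\mathbf{z}_{t-1}$ but not $\mathbf{z}_t$; the leader observes $f_t$ after round $t$. Expected regret: $\mathbb{E}[R(T)]=\mathbb{E}_{\mathbf{z}_1,\ldots,\mathbf{z}_T\sim\mathcal{P}}\big[\sum_t u(\mathbf{z}_t,\pi^*(\mathbf{z}_t),b_{f_t}(\mathbf{z}_t,\pi^*(\mathbf{z}_t)))-u(\mathbf{z}_t,\mathbf{x}_t,b_{f_t}(\mathbf{z}_t,\mathbf{x}_t))\big]$ (also over the algorithm's randomness), where $\pi^*$ is the optimal policy given $f_1,\ldots,f_T$ and $\mathcal{P}$. *)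

theory Defs
  imports "HOL-Analysis.Analysis" "HOL-Probability.Probability"
begin

(* Conventions:
   - contexts are points of R^d, embedded as functions nat => real vanishing at indices >= d;
   - leader actions: a finite set A of naturals; mixed strategies x :: nat => real supported on A;
   - follower actions: a finite nonempty set Af of naturals, ties broken by the order of nat;
   - follower types are indexed 0..K-1 (type i has utility uf i);
   - rounds are indexed 0..T-1. *)

definition mixed_strats :: "nat set \<Rightarrow> (nat \<Rightarrow> real) set" where
  "mixed_strats A = {x. (\<forall>a\<in>A. 0 \<le> x a) \<and> (\<forall>a. a \<notin> A \<longrightarrow> x a = 0) \<and> (\<Sum>a\<in>A. x a) = 1}"

definition l1dist :: "nat set \<Rightarrow> (nat \<Rightarrow> real) \<Rightarrow> (nat \<Rightarrow> real) \<Rightarrow> real" where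
  "l1dist A x y = (\<Sum>a\<in>A. \<bar>x a - y a\<bar>)"

definition mixed_util :: "nat set \<Rightarrow> ('z \<Rightarrow> nat \<Rightarrow> nat \<Rightarrow> real) \<Rightarrow> 'z \<Rightarrow> (nat \<Rightarrow> real) \<Rightarrow> nat \<Rightarrow> real" where
  "mixed_util A v z x af = (\<Sum>a\<in>A. x a * v z a af)"

definition best_resp :: "nat set \<Rightarrow> nat set \<Rightarrow> (nat \<Rightarrow> 'z \<Rightarrow> nat \<Rightarrow> nat \<Rightarrow> real)
    \<Rightarrow> nat \<Rightarrow> 'z \<Rightarrow> (nat \<Rightarrow> real) \<Rightarrow> nat" where
  "best_resp A Af uf i z x = (LEAST af. af \<in> Af \<and>
      (\<forall>af'\<in>Af. mixed_util A (uf i) z x af' \<le> mixed_util A (uf i) z x af))"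

definition leader_gain :: "nat set \<Rightarrow> nat set \<Rightarrow> ('z \<Rightarrow> nat \<Rightarrow> nat \<Rightarrow> real)
    \<Rightarrow> (nat \<Rightarrow> 'z \<Rightarrow> nat \<Rightarrow> nat \<Rightarrow> real) \<Rightarrow> nat \<Rightarrow> 'z \<Rightarrow> (nat \<Rightarrow> real) \<Rightarrow> real" where
  "leader_gain A Af u uf i z x = mixed_util A u z x (best_resp A Af uf i z x)"

definition br_region :: "nat set \<Rightarrow> nat set \<Rightarrow> (nat \<Rightarrow> 'z \<Rightarrow> nat \<Rightarrow> nat \<Rightarrow> real) \<Rightarrow> nat
    \<Rightarrow> 'z \<Rightarrow> (nat \<Rightarrow> nat) \<Rightarrow> (nat \<Rightarrow> real) set" where
  "br_region A Af uf K z \<sigma> = {x \<in> mixed_strats A. \<forall>i<K. best_resp A Af uf i z x = \<sigma> i}"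

definition is_extreme_point :: "(nat \<Rightarrow> real) \<Rightarrow> (nat \<Rightarrow> real) set \<Rightarrow> bool" where
  "is_extreme_point x S \<longleftrightarrow> x \<in> S \<and>
     \<not> (\<exists>y\<in>S. \<exists>w\<in>S. y \<noteq> w \<and> (\<exists>\<theta>. 0 < \<theta> \<and> \<theta> < 1 \<and> x = (\<lambda>a. (1 - \<theta>) * y a + \<theta> * w a)))"

text \<open>E_z is a set of delta-approximate extreme points (closure taken in R^A; on vectors
  supported on the finite set A the product topology is the Euclidean one)\<close>
definition approx_extreme_points :: "nat set \<Rightarrow> nat set \<Rightarrow> (nat \<Rightarrow> 'z \<Rightarrow> nat \<Rightarrow> nat \<Rightarrow> real) \<Rightarrow> nat
    \<Rightarrow> real \<Rightarrow> 'z \<Rightarrow> (nat \<Rightarrow> real) set \<Rightarrow> bool" where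
  "approx_extreme_points A Af uf K \<delta> z Ez \<longleftrightarrow>
     (\<forall>\<sigma>. br_region A Af uf K z \<sigma> \<noteq> {} \<longrightarrow>
        (\<forall>x. is_extreme_point x (closure (br_region A Af uf K z \<sigma>)) \<longrightarrow>
           (x \<in> br_region A Af uf K z \<sigma> \<and> x \<in> Ez) \<or>
           (\<exists>x'\<in>Ez \<inter> br_region A Af uf K z \<sigma>. l1dist A x' x \<le> \<delta>)))"

definition weight_grid :: "nat \<Rightarrow> nat \<Rightarrow> (nat \<Rightarrow> real) set" where
  "weight_grid K T = {\<omega>. (\<forall>i<K. 0 \<le> \<omega> i \<and> real T * \<omega> i \<in> \<nat>) \<and> (\<forall>i\<ge>K. \<omega> i = 0)
                          \<and> (\<Sum>i<K. \<omega> i) = 1}"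

definition policy_class :: "'z measure \<Rightarrow> nat \<Rightarrow> nat \<Rightarrow> ((nat \<Rightarrow> real) \<Rightarrow> 'z \<Rightarrow> (nat \<Rightarrow> real))
    \<Rightarrow> ('z \<Rightarrow> (nat \<Rightarrow> real)) set" where
  "policy_class P K T pol = (\<lambda>\<omega>. restrict (pol \<omega>) (space P)) ` weight_grid K T"

definition hedge_prob :: "nat set \<Rightarrow> nat set \<Rightarrow> ('z \<Rightarrow> nat \<Rightarrow> nat \<Rightarrow> real)
    \<Rightarrow> (nat \<Rightarrow> 'z \<Rightarrow> nat \<Rightarrow> nat \<Rightarrow> real) \<Rightarrow> ('z \<Rightarrow> (nat \<Rightarrow> real)) set \<Rightarrow> nat
    \<Rightarrow> (nat \<Rightarrow> 'z) \<Rightarrow> (nat \<Rightarrow> nat) \<Rightarrow> nat \<Rightarrow> ('z \<Rightarrow> (nat \<Rightarrow> real)) \<Rightarrow> real" where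
  "hedge_prob A Af u uf Pol T zs fs t \<pi> =
     (let \<eta> = sqrt (ln (real (card Pol)) / real T);
          w = (\<lambda>\<pi>'. exp (- \<eta> * (\<Sum>s<t. - leader_gain A Af u uf (fs s) (zs s) (\<pi>' (zs s)))))
      in w \<pi> / (\<Sum>\<pi>'\<in>Pol. w \<pi>'))"

definition benchmark :: "'z measure \<Rightarrow> nat set \<Rightarrow> nat set \<Rightarrow> ('z \<Rightarrow> nat \<Rightarrow> nat \<Rightarrow> real)
    \<Rightarrow> (nat \<Rightarrow> 'z \<Rightarrow> nat \<Rightarrow> nat \<Rightarrow> real) \<Rightarrow> nat \<Rightarrow> (nat \<Rightarrow> nat) \<Rightarrow> real" where
  "benchmark P A Af u uf T fs =
     (SUP \<pi> \<in> {\<pi>. (\<forall>z\<in>space P. \<pi> z \<in> mixed_strats A) \<and> (\<forall>a. (\<lambda>z. \<pi> z a) \<in> borel_measurable P)}.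
        (\<Sum>t<T. \<integral>z. leader_gain A Af u uf (fs t) z (\<pi> z) \<partial>P))"

text \<open>expected contextual Stackelberg regret of Hedge over Pol against adversary adv
  (f_t = adv t zs), contexts z_0..z_{T-1} i.i.d. from P; the expectation over the leader's
  draw pi_t ~ p_t is taken inside (the adversary does not see these draws)\<close>
definition hedge_expected_regret :: "'z measure \<Rightarrow> nat set \<Rightarrow> nat set \<Rightarrow> ('z \<Rightarrow> nat \<Rightarrow> nat \<Rightarrow> real)
    \<Rightarrow> (nat \<Rightarrow> 'z \<Rightarrow> nat \<Rightarrow> nat \<Rightarrow> real) \<Rightarrow> nat \<Rightarrow> nat
    \<Rightarrow> ((nat \<Rightarrow> real) \<Rightarrow> 'z \<Rightarrow> (nat \<Rightarrow> real)) \<Rightarrow> (nat \<Rightarrow> (nat \<Rightarrow> 'z) \<Rightarrow> nat) \<Rightarrow> real" where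
  "hedge_expected_regret P A Af u uf K T pol adv =
     (let Pol = policy_class P K T pol in
      \<integral>zs. (let fs = (\<lambda>t. adv t zs) in
              benchmark P A Af u uf T fs
              - (\<Sum>t<T. \<Sum>\<pi>\<in>Pol. hedge_prob A Af u uf Pol T zs fs t \<pi>
                                  * leader_gain A Af u uf (fs t) (zs t) (\<pi> (zs t))))
        \<partial>(PiM {..<T} (\<lambda>_. P)))"

end

(*
  Fix the contexts z_1..z_T and let w be the empirical frequencies of the follower types they
  induce; w lies on the grid Omega.  Contexts are drawn afresh, so the benchmark value of any
  policy pi is T E_z[sum_i w_i u_i(z, pi(z))].  At each context, pi(z) is beaten up to delta by a
  point of E_z: on the best-response region of pi(z) the objective is linear, so it is maximised
  at an extreme point of the closure, which E_z approximates.  Hence the benchmark is at most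
  sum_t E_z[u_{f_t}(z, pi^(w)(z))] + T delta, and Hedge competes with pi^(w) on the realised
  contexts up to 2 sqrt(T ln |Pi|).  The remaining gap between expected and realised gains of
  pi^(w) is, for each fixed grid point, a sum of martingale differences (f_t depends only on
  earlier contexts); Hoeffding's lemma bounds its exponential moment by exp(l^2 T / 8) round by
  round, and a union bound over the at most (T+1)^K grid points gives O(sqrt(K T log T)).
*)

theory Submission
  imports Defs
begin

section \<open>Mixed strategies and best responses\<close>

lemma closed_mixed_strats: "closed (mixed_strats A)"
proof -
  have "mixed_strats A = {x. \<forall>a. a \<in> A \<longrightarrow> 0 \<le> x a} \<inter> {x. \<forall>a. a \<notin> A \<longrightarrow> x a = 0}
       \<inter> {x. (\<Sum>a\<in>A. x a) = 1}"
    unfolding mixed_strats_def by auto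
  moreover have "closed {x::nat\<Rightarrow>real. \<forall>a. a \<in> A \<longrightarrow> 0 \<le> x a}"
    by (intro closed_Collect_all closed_Collect_imp closed_Collect_le continuous_intros) auto
  moreover have "closed {x::nat\<Rightarrow>real. \<forall>a. a \<notin> A \<longrightarrow> x a = 0}"
    by (intro closed_Collect_all closed_Collect_imp closed_Collect_eq continuous_intros) auto
  moreover have "closed {x::nat\<Rightarrow>real. (\<Sum>a\<in>A. x a) = 1}"
    by (intro closed_Collect_eq continuous_intros continuous_on_product_coordinates)
  ultimately show ?thesis by (simp add: closed_Int)
qed

lemma mixed_strats_le_one:
  assumes "x \<in> mixed_strats A" "finite A"
  shows "x a \<le> 1"
proof (cases "a \<in> A")
  case True
  then have "x a \<le> (\<Sum>a\<in>A. x a)"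
    using assms by (intro member_le_sum) (auto simp: mixed_strats_def)
  then show ?thesis using assms(1) by (simp add: mixed_strats_def)
qed (use assms in \<open>simp add: mixed_strats_def\<close>)

lemma compact_mixed_strats:
  assumes "finite A"
  shows "compact (mixed_strats A)"
proof -
  define B where "B = PiE UNIV (\<lambda>a::nat. if a \<in> A then {0..1::real} else {0})"
  have "compactin (product_topology (\<lambda>_. euclidean) UNIV) B"
    unfolding B_def compactin_PiE by auto
  then have "compact B" by (simp add: euclidean_product_topology)
  moreover have "mixed_strats A \<subseteq> B"
    using mixed_strats_le_one[OF _ assms] by (auto simp: B_def mixed_strats_def)
  ultimately show ?thesis
    using closed_mixed_strats compact_Int_closed inf.absorb2 by metis
qed

lemma mixed_util_in_unit_interval:
  assumes "x \<in> mixed_strats A" "\<forall>a\<in>A. 0 \<le> v z a af \<and> v z a af \<le> 1"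
  shows "0 \<le> mixed_util A v z x af \<and> mixed_util A v z x af \<le> 1"
proof -
  have x: "\<forall>a\<in>A. 0 \<le> x a" "(\<Sum>a\<in>A. x a) = 1"
    using assms(1) by (auto simp: mixed_strats_def)
  have "0 \<le> (\<Sum>a\<in>A. x a * v z a af)"
    using x assms(2) by (intro sum_nonneg) auto
  moreover have "(\<Sum>a\<in>A. x a * v z a af) \<le> (\<Sum>a\<in>A. x a)"
    using x assms(2) by (intro sum_mono) (simp add: mult_left_le)
  ultimately show ?thesis using x by (simp add: mixed_util_def)
qed

lemma mixed_util_convex_comb:
  "mixed_util A v z (\<lambda>a. (1 - \<theta>) * y a + \<theta> * w a) af
     = (1 - \<theta>) * mixed_util A v z y af + \<theta> * mixed_util A v z w af"
  unfolding mixed_util_def sum_distrib_left sum.distrib[symmetric]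
  by (rule sum.cong) (auto simp: algebra_simps)

lemma mixed_util_diff_le_l1dist:
  assumes "\<forall>a\<in>A. \<bar>v z a af\<bar> \<le> 1"
  shows "mixed_util A v z y af - mixed_util A v z x af \<le> l1dist A x y"
proof -
  have "mixed_util A v z y af - mixed_util A v z x af = (\<Sum>a\<in>A. (y a - x a) * v z a af)"
    by (simp add: mixed_util_def sum_subtractf[symmetric] left_diff_distrib)
  also have "\<dots> \<le> (\<Sum>a\<in>A. \<bar>x a - y a\<bar>)"
  proof (rule sum_mono)
    fix a assume "a \<in> A"
    then have "\<bar>(y a - x a) * v z a af\<bar> \<le> \<bar>x a - y a\<bar>"
      using assms by (simp add: abs_mult abs_minus_commute mult_left_le)
    then show "(y a - x a) * v z a af \<le> \<bar>x a - y a\<bar>" by linarith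
  qed
  finally show ?thesis by (simp add: l1dist_def)
qed

lemma weighted_mixed_util_diff_le_l1dist:
  assumes "\<forall>i<K. 0 \<le> \<omega> i" "(\<Sum>i<K. \<omega> i) = 1" "\<forall>i<K. \<forall>a\<in>A. \<bar>v z a (\<sigma> i)\<bar> \<le> 1"
  shows "(\<Sum>i<K. mixed_util A v z y (\<sigma> i) * \<omega> i) - (\<Sum>i<K. mixed_util A v z x (\<sigma> i) * \<omega> i)
           \<le> l1dist A x y"
proof -
  have "(\<Sum>i<K. mixed_util A v z y (\<sigma> i) * \<omega> i) - (\<Sum>i<K. mixed_util A v z x (\<sigma> i) * \<omega> i)
      = (\<Sum>i<K. (mixed_util A v z y (\<sigma> i) - mixed_util A v z x (\<sigma> i)) * \<omega> i)"
    by (simp add: sum_subtractf[symmetric] left_diff_distrib)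
  also have "\<dots> \<le> (\<Sum>i<K. l1dist A x y * \<omega> i)"
    using assms by (intro sum_mono mult_right_mono mixed_util_diff_le_l1dist) auto
  also have "\<dots> = l1dist A x y"
    using assms(2) by (simp add: sum_distrib_left[symmetric])
  finally show ?thesis .
qed

lemma best_resp_mem:
  assumes "finite Af" "Af \<noteq> {}"
  shows "best_resp A Af uf i z x \<in> Af"
proof -
  let ?f = "\<lambda>af. mixed_util A (uf i) z x af"
  have "Max (?f ` Af) \<in> ?f ` Af" using assms by simp
  then obtain m where "m \<in> Af" "?f m = Max (?f ` Af)" by auto
  then have "\<exists>af. af \<in> Af \<and> (\<forall>af'\<in>Af. ?f af' \<le> ?f af)"
    using assms by auto
  from LeastI_ex[OF this] show ?thesis by (simp add: best_resp_def)
qed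

lemma leader_gain_measurable:
  assumes "finite Af"
    and "\<And>a af. (\<lambda>z. u z a af) \<in> borel_measurable P"
    and "\<And>i a af. (\<lambda>z. uf i z a af) \<in> borel_measurable P"
    and "\<And>a. (\<lambda>z. \<pi> z a) \<in> borel_measurable P"
  shows "(\<lambda>z. leader_gain A Af u uf i z (\<pi> z)) \<in> borel_measurable P"
proof -
  have util: "(\<lambda>z. mixed_util A v z (\<pi> z) af) \<in> borel_measurable P"
    if "\<And>a af. (\<lambda>z. v z a af) \<in> borel_measurable P" for v af
    unfolding mixed_util_def using that assms(4) by measurable
  have [measurable]: "(\<lambda>z. mixed_util A (uf i) z (\<pi> z) af) \<in> borel_measurable P" for af
    using util assms(3) by blast
  have "(\<lambda>z. best_resp A Af uf i z (\<pi> z)) \<in> measurable P (count_space UNIV)"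
    unfolding best_resp_def using assms(1) by (intro measurable_Least) measurable
  then show ?thesis
    unfolding leader_gain_def
    by (rule measurable_compose_countable[rotated]) (use util assms(2) in blast)
qed

section \<open>Maximising linear objectives at extreme points\<close>

lemma sum_squares_convex_comb:
  fixes y w :: "'a \<Rightarrow> real"
  shows "(\<Sum>a\<in>A. ((1 - \<theta>) * y a + \<theta> * w a)\<^sup>2)
     = (1 - \<theta>) * (\<Sum>a\<in>A. (y a)\<^sup>2) + \<theta> * (\<Sum>a\<in>A. (w a)\<^sup>2) - \<theta> * (1 - \<theta>) * (\<Sum>a\<in>A. (y a - w a)\<^sup>2)"
proof -
  have "(\<Sum>a\<in>A. ((1 - \<theta>) * y a + \<theta> * w a)\<^sup>2)
      = (\<Sum>a\<in>A. (1 - \<theta>) * (y a)\<^sup>2 + \<theta> * (w a)\<^sup>2 - \<theta> * (1 - \<theta>) * (y a - w a)\<^sup>2)"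
    by (intro sum.cong refl) (simp add: power2_eq_square algebra_simps)
  then show ?thesis by (simp add: sum.distrib sum_subtractf sum_distrib_left)
qed

lemma sum_squares_maximizer_is_extreme:
  fixes L :: "(nat \<Rightarrow> real) \<Rightarrow> real"
  assumes "finite A" and S_supp: "\<forall>y\<in>S. \<forall>a. a \<notin> A \<longrightarrow> y a = 0"
    and L_affine: "\<And>y w \<theta>. y \<in> S \<Longrightarrow> w \<in> S \<Longrightarrow>
                     L (\<lambda>a. (1 - \<theta>) * y a + \<theta> * w a) = (1 - \<theta>) * L y + \<theta> * L w"
    and e: "e \<in> S" "\<forall>y\<in>S. L y \<le> L e"
    and e_max: "\<forall>y\<in>S. L y = L e \<longrightarrow> (\<Sum>a\<in>A. (y a)\<^sup>2) \<le> (\<Sum>a\<in>A. (e a)\<^sup>2)"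
  shows "is_extreme_point e S"
  unfolding is_extreme_point_def
proof (intro conjI notI)
  show "e \<in> S" by (rule e(1))
  define q where "q y = (\<Sum>a\<in>A. (y a)\<^sup>2)" for y :: "nat \<Rightarrow> real"
  assume "\<exists>y\<in>S. \<exists>w\<in>S. y \<noteq> w \<and> (\<exists>\<theta>>0. \<theta> < 1 \<and> e = (\<lambda>a. (1 - \<theta>) * y a + \<theta> * w a))"
  then obtain y w \<theta> where yw: "y \<in> S" "w \<in> S" "y \<noteq> w" "0 < \<theta>" "\<theta> < 1"
    and e_eq: "e = (\<lambda>a. (1 - \<theta>) * y a + \<theta> * w a)" by blast
  have "L e = (1 - \<theta>) * L y + \<theta> * L w"
    using L_affine[OF yw(1,2)] e_eq by simp
  moreover have "0 \<le> (1 - \<theta>) * (L e - L y)" "0 \<le> \<theta> * (L e - L w)"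
    using e(2) yw by auto
  ultimately have "(1 - \<theta>) * (L e - L y) = 0" "\<theta> * (L e - L w) = 0"
    by (auto simp: algebra_simps)
  then have "L y = L e" "L w = L e"
    using yw(4,5) by auto
  then have "(1 - \<theta>) * q y + \<theta> * q w \<le> (1 - \<theta>) * q e + \<theta> * q e"
    using e_max yw by (intro add_mono mult_left_mono) (auto simp: q_def)
  moreover obtain a0 where "y a0 \<noteq> w a0" using yw(3) by auto
  then have "a0 \<in> A" using S_supp yw(1,2) by metis
  then have "0 < \<theta> * (1 - \<theta>) * (\<Sum>a\<in>A. (y a - w a)\<^sup>2)"
    using \<open>y a0 \<noteq> w a0\<close> assms(1) yw(4,5) by (intro mult_pos_pos sum_pos2[of A a0]) auto
  moreover have "q e = (1 - \<theta>) * q y + \<theta> * q w - \<theta> * (1 - \<theta>) * (\<Sum>a\<in>A. (y a - w a)\<^sup>2)"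
    unfolding q_def e_eq by (rule sum_squares_convex_comb)
  ultimately have "q e < (1 - \<theta>) * q e + \<theta> * q e" by linarith
  then show False by (simp add: algebra_simps)
qed

lemma extreme_point_maximizer_exists:
  fixes L :: "(nat \<Rightarrow> real) \<Rightarrow> real"
  assumes "finite A" "compact S" "S \<noteq> {}" and S_supp: "\<forall>y\<in>S. \<forall>a. a \<notin> A \<longrightarrow> y a = 0"
    and "continuous_on S L"
    and L_affine: "\<And>y w \<theta>. y \<in> S \<Longrightarrow> w \<in> S \<Longrightarrow>
                     L (\<lambda>a. (1 - \<theta>) * y a + \<theta> * w a) = (1 - \<theta>) * L y + \<theta> * L w"
  shows "\<exists>e. is_extreme_point e S \<and> (\<forall>y\<in>S. L y \<le> L e)"
proof -
  define q where "q y = (\<Sum>a\<in>A. (y a)\<^sup>2)" for y :: "nat \<Rightarrow> real"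
  obtain e0 where e0: "e0 \<in> S" "\<forall>y\<in>S. L y \<le> L e0"
    using continuous_attains_sup assms(2,3,5) by blast
  define M where "M = {y \<in> S. L y = L e0}"
  have "compact (S \<inter> M)"
    unfolding M_def using assms(2,5)
    by (intro compact_Int_closed continuous_closed_preimage_constant compact_imp_closed)
  moreover have "S \<inter> M = M" unfolding M_def by blast
  ultimately have "compact M" by simp
  moreover have "M \<noteq> {}" using e0 by (auto simp: M_def)
  moreover have "continuous_on UNIV q"
    unfolding q_def by (intro continuous_intros continuous_on_product_coordinates)
  ultimately obtain e where e: "e \<in> M" "\<forall>y\<in>M. q y \<le> q e"
    using continuous_attains_sup[of M q] continuous_on_subset[of UNIV q M] by blast
  have "e \<in> S" "L e = L e0" using e(1) by (auto simp: M_def)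
  have e_le: "\<forall>y\<in>S. L y \<le> L e" using e0(2) \<open>L e = L e0\<close> by simp
  have e_max: "\<forall>y\<in>S. L y = L e \<longrightarrow> (\<Sum>a\<in>A. (y a)\<^sup>2) \<le> (\<Sum>a\<in>A. (e a)\<^sup>2)"
    using e(2) \<open>L e = L e0\<close> by (simp add: M_def q_def)
  have "is_extreme_point e S"
    using sum_squares_maximizer_is_extreme[OF assms(1) S_supp L_affine \<open>e \<in> S\<close> e_le e_max] .
  then show ?thesis using e e0 by (auto simp: M_def)
qed

text \<open>On the best-response region of \<open>x\<close> the weighted gain is linear in the strategy; its
  maximum over the closure is attained at an extreme point, which \<open>Ez\<close> approximates within
  \<open>\<delta>\<close> inside the same region.\<close>
lemma approx_extreme_points_near_optimal:
  assumes fin: "finite A" "finite Af" "Af \<noteq> {}"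
    and u_bound: "\<forall>a\<in>A. \<forall>af\<in>Af. \<bar>u z a af\<bar> \<le> 1"
    and Ez: "approx_extreme_points A Af uf K \<delta> z Ez"
    and \<omega>: "\<forall>i<K. 0 \<le> \<omega> i" "(\<Sum>i<K. \<omega> i) = 1"
    and x: "x \<in> mixed_strats A"
  shows "\<exists>x'\<in>Ez. (\<Sum>i<K. leader_gain A Af u uf i z x * \<omega> i)
                    \<le> (\<Sum>i<K. leader_gain A Af u uf i z x' * \<omega> i) + max 0 \<delta>"
proof -
  define \<sigma> where "\<sigma> i = best_resp A Af uf i z x" for i
  have \<sigma>_mem: "\<sigma> i \<in> Af" for i
    unfolding \<sigma>_def by (rule best_resp_mem[OF fin(2,3)])
  define R where "R = br_region A Af uf K z \<sigma>"
  define L where "L y = (\<Sum>i<K. mixed_util A u z y (\<sigma> i) * \<omega> i)" for y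
  have "x \<in> R" using x by (simp add: R_def br_region_def \<sigma>_def)
  have L_gain: "L y = (\<Sum>i<K. leader_gain A Af u uf i z y * \<omega> i)" if "y \<in> R" for y
    using that by (simp add: L_def R_def br_region_def leader_gain_def)
  have "closure R \<subseteq> mixed_strats A"
    unfolding R_def br_region_def by (intro closure_minimal closed_mixed_strats) auto
  moreover have "compact (closure R)"
    using calculation compact_mixed_strats[OF fin(1)]
    by (metis closed_closure compact_Int_closed inf.absorb2)
  moreover have "continuous_on (closure R) L"
    unfolding L_def mixed_util_def
    by (intro continuous_intros continuous_on_subset[OF continuous_on_product_coordinates]) auto
  moreover have "L (\<lambda>a. (1 - \<theta>) * y a + \<theta> * w a) = (1 - \<theta>) * L y + \<theta> * L w" for y w \<theta>
    unfolding L_def mixed_util_convex_comb sum_distrib_left sum.distrib[symmetric]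
    by (rule sum.cong) (auto simp: algebra_simps)
  ultimately obtain e where e: "is_extreme_point e (closure R)" "\<forall>y\<in>closure R. L y \<le> L e"
    using extreme_point_maximizer_exists[OF fin(1), of "closure R" L] \<open>x \<in> R\<close>
    by (fastforce simp: mixed_strats_def)
  have "L x \<le> L e" using e(2) \<open>x \<in> R\<close> closure_subset by blast
  have "(e \<in> R \<and> e \<in> Ez) \<or> (\<exists>x'\<in>Ez \<inter> R. l1dist A x' e \<le> \<delta>)"
    using Ez e(1) \<open>x \<in> R\<close> unfolding approx_extreme_points_def R_def by blast
  then obtain x' where x': "x' \<in> Ez" "x' \<in> R" "L e \<le> L x' + max 0 \<delta>"
  proof (elim disjE conjE bexE)
    assume "e \<in> R" "e \<in> Ez"
    then show thesis using that[of e] by simp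
  next
    fix x' assume x': "x' \<in> Ez \<inter> R" "l1dist A x' e \<le> \<delta>"
    have "L e - L x' \<le> l1dist A x' e"
      unfolding L_def using \<omega> u_bound \<sigma>_mem by (intro weighted_mixed_util_diff_le_l1dist) auto
    then show thesis using that[of x'] x' by simp
  qed
  then show ?thesis
    using \<open>L x \<le> L e\<close> L_gain[OF \<open>x \<in> R\<close>] L_gain[OF x'(2)] by (intro bexI[of _ x']) auto
qed

section \<open>The weight grid\<close>

lemma weight_grid_embedding:
  assumes "0 < T"
  obtains h where "inj_on h (weight_grid K T)" "h ` weight_grid K T \<subseteq> PiE {..<K} (\<lambda>_. {0..T})"
proof
  define h where "h \<omega> = (\<lambda>i\<in>{..<K}. nat \<lfloor>real T * \<omega> i\<rfloor>)" for \<omega> :: "nat \<Rightarrow> real"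
  show "inj_on h (weight_grid K T)"
  proof (rule inj_onI, rule ext)
    fix \<omega> \<omega>' i assume \<omega>: "\<omega> \<in> weight_grid K T" "\<omega>' \<in> weight_grid K T" and "h \<omega> = h \<omega>'"
    show "\<omega> i = \<omega>' i"
    proof (cases "i < K")
      case True
      obtain m where m: "real T * \<omega> i = real m"
        using \<omega>(1) True unfolding weight_grid_def by (auto elim!: Nats_cases)
      obtain m' where m': "real T * \<omega>' i = real m'"
        using \<omega>(2) True unfolding weight_grid_def by (auto elim!: Nats_cases)
      have "h \<omega> i = h \<omega>' i" using \<open>h \<omega> = h \<omega>'\<close> by simp
      then have "m = m'" using True m m' by (simp add: h_def)
      then have "real T * \<omega> i = real T * \<omega>' i" using m m' by simp
      then show ?thesis using assms by simp
    qed (use \<omega> in \<open>simp add: weight_grid_def\<close>)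
  qed
  have "nat \<lfloor>real T * \<omega> i\<rfloor> \<le> T" if "\<omega> \<in> weight_grid K T" "i < K" for \<omega> i
  proof -
    have "\<omega> i \<le> (\<Sum>j<K. \<omega> j)"
      using that by (intro member_le_sum) (auto simp: weight_grid_def)
    then have "real T * \<omega> i \<le> real T"
      using that by (simp add: weight_grid_def mult_left_le)
    then show ?thesis by (simp add: nat_le_iff floor_le_iff)
  qed
  then show "h ` weight_grid K T \<subseteq> PiE {..<K} (\<lambda>_. {0..T})"
    unfolding h_def image_subset_iff restrict_PiE_iff by simp
qed

lemma finite_weight_grid: "0 < T \<Longrightarrow> finite (weight_grid K T)"
proof -
  assume "0 < T"
  then obtain h where h: "inj_on h (weight_grid K T)" "h ` weight_grid K T \<subseteq> PiE {..<K} (\<lambda>_. {0..T})"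
    by (rule weight_grid_embedding)
  have "finite (h ` weight_grid K T)"
    using h(2) by (rule finite_subset) (simp add: finite_PiE)
  then show ?thesis by (rule finite_imageD[OF _ h(1)])
qed

lemma card_weight_grid_le: "0 < T \<Longrightarrow> card (weight_grid K T) \<le> (T + 1) ^ K"
proof -
  assume "0 < T"
  then obtain h where h: "inj_on h (weight_grid K T)" "h ` weight_grid K T \<subseteq> PiE {..<K} (\<lambda>_. {0..T})"
    by (rule weight_grid_embedding)
  have "card (weight_grid K T) = card (h ` weight_grid K T)"
    using h(1) by (simp add: card_image)
  also have "\<dots> \<le> card (PiE {..<K} (\<lambda>_. {0..T}))"
    using h(2) by (intro card_mono) (simp_all add: finite_PiE)
  finally have "card (weight_grid K T) \<le> card (PiE {..<K} (\<lambda>_. {0..T}))" .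
  then show ?thesis by (simp add: card_PiE)
qed

lemma weight_grid_nonempty: "1 \<le> K \<Longrightarrow> (\<lambda>i. if i = 0 then 1 else 0) \<in> weight_grid K T"
  by (auto simp: weight_grid_def sum.delta)

lemma ln_card_weight_grid_le:
  assumes "1 \<le> K" "0 < T"
  shows "ln (real (card (weight_grid K T))) \<le> real K * ln (real T + 1)"
proof -
  have "0 < card (weight_grid K T)"
    using weight_grid_nonempty[OF assms(1)] finite_weight_grid[OF assms(2)] by (auto simp: card_gt_0_iff)
  moreover have "real (card (weight_grid K T)) \<le> real ((T + 1) ^ K)"
    using card_weight_grid_le[OF assms(2), of K] by (simp only: of_nat_le_iff)
  then have "real (card (weight_grid K T)) \<le> (real T + 1) ^ K"
    by (simp add: add.commute)
  ultimately have "ln (real (card (weight_grid K T))) \<le> ln ((real T + 1) ^ K)"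
    by (subst ln_le_cancel_iff) auto
  then show ?thesis by (simp add: ln_realpow)
qed

lemma ln_add_one_le_twice_ln:
  fixes x :: real
  assumes "2 \<le> x"
  shows "ln (x + 1) \<le> 2 * ln x"
proof -
  have "2 * x \<le> x * x"
    using assms by (intro mult_right_mono) auto
  then have "x + 1 \<le> x * x"
    using assms by linarith
  then have "ln (x + 1) \<le> ln (x * x)"
    using assms by (subst ln_le_cancel_iff) auto
  then show ?thesis
    using assms by (simp add: ln_mult)
qed

lemma weight_grid_log_bound:
  assumes "1 \<le> K" "1 \<le> T"
  shows "real T * max (ln (real (card (weight_grid K T)))) 1
           \<le> 2 * real K * real T * ln (real T) + real K"
proof -
  define M where "M = real (card (weight_grid K T))"
  have lnM: "ln M \<le> real K * ln (real T + 1)"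
    unfolding M_def using assms by (intro ln_card_weight_grid_le) auto
  show ?thesis
  proof (cases "T = 1")
    case True
    have "ln (2::real) \<le> 1" using ln_le_minus_one[of 2] by simp
    then have "real K * ln 2 \<le> real K * 1" by (intro mult_left_mono) auto
    moreover have "ln M \<le> real K * ln 2" using lnM True by simp
    moreover have "1 \<le> real K" using assms(1) by simp
    ultimately have "max (ln M) 1 \<le> real K" by linarith
    then show ?thesis using True by (simp add: M_def)
  next
    case False
    then have "2 \<le> real T" using assms(2) by simp
    then have "ln M \<le> 2 * real K * ln (real T)"
      using lnM ln_add_one_le_twice_ln mult_left_mono[of "ln (real T + 1)" "2 * ln (real T)" "real K"]
      by simp
    moreover have "ln 2 \<le> ln (real T)"
      using \<open>2 \<le> real T\<close> by simp
    then have "1 * (2/3) \<le> real K * ln (real T)"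
      using assms(1) ln2_ge_two_thirds by (intro mult_mono) auto
    ultimately have "max (ln M) 1 \<le> 2 * real K * ln (real T)" by simp
    then have "real T * max (ln M) 1 \<le> real T * (2 * real K * ln (real T))"
      by (intro mult_left_mono) auto
    then show ?thesis by (simp add: M_def algebra_simps)
  qed
qed

definition type_frequencies :: "nat \<Rightarrow> nat \<Rightarrow> (nat \<Rightarrow> nat) \<Rightarrow> nat \<Rightarrow> real" where
  "type_frequencies K T fs i = (if i < K then real (card {t\<in>{..<T}. fs t = i}) / real T else 0)"

lemma sum_rounds_by_type:
  fixes h :: "nat \<Rightarrow> real" and fs :: "nat \<Rightarrow> nat"
  assumes "\<forall>t<T. fs t < K"
  shows "(\<Sum>t<T. h (fs t)) = (\<Sum>i<K. real (card {t\<in>{..<T}. fs t = i}) * h i)"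
proof -
  have "(\<Sum>t<T. h (fs t)) = (\<Sum>t<T. \<Sum>i<K. if i = fs t then h i else 0)"
    using assms by (intro sum.cong refl) (simp add: sum.delta)
  also have "\<dots> = (\<Sum>i<K. \<Sum>t<T. if i = fs t then h i else 0)"
    by (rule sum.swap)
  also have "\<dots> = (\<Sum>i<K. \<Sum>t<T. if fs t = i then h i else 0)"
    by (simp add: eq_commute)
  also have "\<dots> = (\<Sum>i<K. real (card {t\<in>{..<T}. fs t = i}) * h i)"
  proof (rule sum.cong[OF refl])
    fix i
    have "(\<Sum>t<T. if fs t = i then h i else 0) = (\<Sum>t\<in>{t\<in>{..<T}. fs t = i}. h i)"
      by (rule sum.inter_filter[symmetric]) simp
    then show "(\<Sum>t<T. if fs t = i then h i else 0) = real (card {t\<in>{..<T}. fs t = i}) * h i"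
      by simp
  qed
  finally show ?thesis .
qed

lemma sum_rounds_eq_type_frequencies:
  fixes h :: "nat \<Rightarrow> real"
  assumes "\<forall>t<T. fs t < K" "0 < T"
  shows "(\<Sum>t<T. h (fs t)) = real T * (\<Sum>i<K. h i * type_frequencies K T fs i)"
  using assms by (simp add: sum_rounds_by_type sum_distrib_left type_frequencies_def mult.commute)

lemma type_frequencies_in_weight_grid:
  assumes "\<forall>t<T. fs t < K" "0 < T"
  shows "type_frequencies K T fs \<in> weight_grid K T"
proof -
  have "real T * (\<Sum>i<K. type_frequencies K T fs i) = real T"
    using sum_rounds_eq_type_frequencies[OF assms, of "\<lambda>_. 1"] by simp
  then show ?thesis
    using assms(2) by (auto simp: weight_grid_def type_frequencies_def)
qed

section \<open>Hedge\<close>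

definition hedge_potential :: "real \<Rightarrow> (nat \<Rightarrow> 'p \<Rightarrow> real) \<Rightarrow> 'p set \<Rightarrow> nat \<Rightarrow> real" where
  "hedge_potential \<eta> g Pol t = (\<Sum>\<pi>\<in>Pol. exp (\<eta> * (\<Sum>s<t. g s \<pi>)))"

definition hedge_distribution :: "real \<Rightarrow> (nat \<Rightarrow> 'p \<Rightarrow> real) \<Rightarrow> 'p set \<Rightarrow> nat \<Rightarrow> 'p \<Rightarrow> real" where
  "hedge_distribution \<eta> g Pol t \<pi> = exp (\<eta> * (\<Sum>s<t. g s \<pi>)) / hedge_potential \<eta> g Pol t"

definition hedge_gain :: "real \<Rightarrow> (nat \<Rightarrow> 'p \<Rightarrow> real) \<Rightarrow> 'p set \<Rightarrow> nat \<Rightarrow> real" where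
  "hedge_gain \<eta> g Pol t = (\<Sum>\<pi>\<in>Pol. hedge_distribution \<eta> g Pol t \<pi> * g t \<pi>)"

lemma hedge_potential_pos: "finite Pol \<Longrightarrow> Pol \<noteq> {} \<Longrightarrow> 0 < hedge_potential \<eta> g Pol t"
  unfolding hedge_potential_def by (intro sum_pos) auto

lemma hedge_potential_Suc:
  assumes "finite Pol" "Pol \<noteq> {}" "\<And>\<pi>. \<pi> \<in> Pol \<Longrightarrow> 0 \<le> g t \<pi> \<and> g t \<pi> \<le> 1" "0 \<le> \<eta>" "\<eta> \<le> 1"
  shows "hedge_potential \<eta> g Pol (Suc t)
           \<le> hedge_potential \<eta> g Pol t * exp (\<eta> * hedge_gain \<eta> g Pol t + \<eta>\<^sup>2)"
proof -
  define w where "w \<pi> = exp (\<eta> * (\<Sum>s<t. g s \<pi>))" for \<pi>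
  define W where "W = hedge_potential \<eta> g Pol t"
  have W_pos: "0 < W" unfolding W_def using assms(1,2) by (rule hedge_potential_pos)
  have "hedge_potential \<eta> g Pol (Suc t) = (\<Sum>\<pi>\<in>Pol. w \<pi> * exp (\<eta> * g t \<pi>))"
    by (simp add: hedge_potential_def w_def distrib_left exp_add)
  also have "\<dots> \<le> (\<Sum>\<pi>\<in>Pol. w \<pi> * (1 + \<eta> * g t \<pi> + \<eta>\<^sup>2))"
  proof (intro sum_mono mult_left_mono)
    fix \<pi> assume "\<pi> \<in> Pol"
    then have "0 \<le> \<eta> * g t \<pi>" "\<eta> * g t \<pi> \<le> 1" "(\<eta> * g t \<pi>)\<^sup>2 \<le> \<eta>\<^sup>2"
      using assms(3-5) by (auto simp: mult_le_one power_mult_distrib mult_left_le power_le_one)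
    then show "exp (\<eta> * g t \<pi>) \<le> 1 + \<eta> * g t \<pi> + \<eta>\<^sup>2"
      using exp_bound[of "\<eta> * g t \<pi>"] by linarith
  qed (simp add: w_def)
  also have "\<dots> = W * (1 + \<eta> * hedge_gain \<eta> g Pol t + \<eta>\<^sup>2)"
  proof -
    have "W * hedge_gain \<eta> g Pol t = (\<Sum>\<pi>\<in>Pol. w \<pi> * g t \<pi>)"
      using W_pos by (simp add: hedge_gain_def hedge_distribution_def sum_distrib_left W_def w_def)
    moreover have "W = (\<Sum>\<pi>\<in>Pol. w \<pi>)"
      by (simp add: W_def hedge_potential_def w_def)
    ultimately show ?thesis
      by (simp add: algebra_simps sum.distrib sum_distrib_left sum_distrib_right)
  qed
  also have "\<dots> \<le> W * exp (\<eta> * hedge_gain \<eta> g Pol t + \<eta>\<^sup>2)"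
    using W_pos exp_ge_add_one_self[of "\<eta> * hedge_gain \<eta> g Pol t + \<eta>\<^sup>2"]
    by (intro mult_left_mono) (auto simp: add.assoc)
  finally show ?thesis unfolding W_def .
qed

lemma hedge_potential_le:
  assumes "finite Pol" "Pol \<noteq> {}" "\<And>t \<pi>. t < T \<Longrightarrow> \<pi> \<in> Pol \<Longrightarrow> 0 \<le> g t \<pi> \<and> g t \<pi> \<le> 1"
    "0 \<le> \<eta>" "\<eta> \<le> 1"
  shows "hedge_potential \<eta> g Pol T
           \<le> real (card Pol) * exp (\<eta> * (\<Sum>t<T. hedge_gain \<eta> g Pol t) + \<eta>\<^sup>2 * real T)"
proof -
  have "hedge_potential \<eta> g Pol n
          \<le> real (card Pol) * exp (\<eta> * (\<Sum>t<n. hedge_gain \<eta> g Pol t) + \<eta>\<^sup>2 * real n)"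
    if "n \<le> T" for n
    using that
  proof (induction n)
    case 0
    then show ?case by (simp add: hedge_potential_def)
  next
    case (Suc n)
    have "hedge_potential \<eta> g Pol (Suc n)
            \<le> hedge_potential \<eta> g Pol n * exp (\<eta> * hedge_gain \<eta> g Pol n + \<eta>\<^sup>2)"
      using Suc.prems assms by (intro hedge_potential_Suc) auto
    also have "\<dots> \<le> real (card Pol) * exp (\<eta> * (\<Sum>t<n. hedge_gain \<eta> g Pol t) + \<eta>\<^sup>2 * real n)
                     * exp (\<eta> * hedge_gain \<eta> g Pol n + \<eta>\<^sup>2)"
      using Suc by (intro mult_right_mono) auto
    also have "\<dots> = real (card Pol) * exp (\<eta> * (\<Sum>t<Suc n. hedge_gain \<eta> g Pol t) + \<eta>\<^sup>2 * real (Suc n))"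
      by (simp add: exp_add[symmetric] algebra_simps)
    finally show ?case .
  qed
  then show ?thesis by simp
qed

lemma hedge_regret_le:
  assumes "finite Pol" "\<pi>0 \<in> Pol" "\<And>t \<pi>. t < T \<Longrightarrow> \<pi> \<in> Pol \<Longrightarrow> 0 \<le> g t \<pi> \<and> g t \<pi> \<le> 1"
    "0 < \<eta>" "\<eta> \<le> 1"
  shows "(\<Sum>t<T. g t \<pi>0) - (\<Sum>t<T. hedge_gain \<eta> g Pol t) \<le> ln (real (card Pol)) / \<eta> + \<eta> * real T"
proof -
  have "Pol \<noteq> {}" "0 < real (card Pol)"
    using assms(1,2) card_gt_0_iff by auto
  have "exp (\<eta> * (\<Sum>t<T. g t \<pi>0)) \<le> hedge_potential \<eta> g Pol T"
    unfolding hedge_potential_def using assms(1,2) by (intro member_le_sum) auto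
  also have "\<dots> \<le> real (card Pol) * exp (\<eta> * (\<Sum>t<T. hedge_gain \<eta> g Pol t) + \<eta>\<^sup>2 * real T)"
    using assms \<open>Pol \<noteq> {}\<close> by (intro hedge_potential_le) auto
  finally have "\<eta> * (\<Sum>t<T. g t \<pi>0) \<le> ln (real (card Pol)) + \<eta> * (\<Sum>t<T. hedge_gain \<eta> g Pol t) + \<eta>\<^sup>2 * real T"
    using \<open>0 < real (card Pol)\<close> by (simp add: ln_le_cancel_iff[symmetric] ln_mult del: ln_le_cancel_iff)
  then show ?thesis
    using assms(4) by (simp add: field_simps power2_eq_square)
qed

lemma hedge_gain_nonneg:
  assumes "\<And>\<pi>. \<pi> \<in> Pol \<Longrightarrow> 0 \<le> g t \<pi>"
  shows "0 \<le> hedge_gain \<eta> g Pol t"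
  unfolding hedge_gain_def hedge_distribution_def hedge_potential_def
  using assms by (intro sum_nonneg mult_nonneg_nonneg divide_nonneg_nonneg) auto

lemma hedge_regret_le_horizon:
  assumes "\<pi>0 \<in> Pol" "\<And>t \<pi>. t < T \<Longrightarrow> \<pi> \<in> Pol \<Longrightarrow> 0 \<le> g t \<pi> \<and> g t \<pi> \<le> 1"
  shows "(\<Sum>t<T. g t \<pi>0) - (\<Sum>t<T. hedge_gain \<eta> g Pol t) \<le> real T"
proof -
  have "(\<Sum>t<T. g t \<pi>0) \<le> (\<Sum>t<T. 1)"
    using assms by (intro sum_mono) auto
  moreover have "0 \<le> (\<Sum>t<T. hedge_gain \<eta> g Pol t)"
    using assms(2) by (intro sum_nonneg hedge_gain_nonneg) auto
  ultimately show ?thesis by simp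
qed

lemma sqrt_div_mul_self:
  fixes T x :: real
  assumes "0 < T" "0 \<le> x"
  shows "sqrt (x / T) * T = sqrt (T * x)"
proof -
  have "sqrt (x / T) * T = sqrt (x / T) * sqrt (T\<^sup>2)"
    using assms by simp
  also have "\<dots> = sqrt (x / T * T\<^sup>2)"
    by (rule real_sqrt_mult[symmetric])
  also have "x / T * T\<^sup>2 = T * x"
    using assms by (simp add: power2_eq_square)
  finally show ?thesis .
qed

text \<open>When \<open>ln |Pol| > T\<close> the tuned learning rate exceeds \<open>1\<close> and the Hedge analysis does
  not apply; but then the trivial bound \<open>T\<close> is already below \<open>sqrt (T ln |Pol|)\<close>.\<close>
lemma hedge_regret_tuned:
  assumes "finite Pol" "\<pi>0 \<in> Pol" "\<And>t \<pi>. t < T \<Longrightarrow> \<pi> \<in> Pol \<Longrightarrow> 0 \<le> g t \<pi> \<and> g t \<pi> \<le> 1"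
  shows "(\<Sum>t<T. g t \<pi>0) - (\<Sum>t<T. hedge_gain (sqrt (ln (real (card Pol)) / real T)) g Pol t)
           \<le> 2 * sqrt (real T * ln (real (card Pol)))"
proof -
  define N where "N = real (card Pol)"
  define \<eta> where "\<eta> = sqrt (ln N / real T)"
  have "0 < card Pol" using assms(1,2) card_gt_0_iff by blast
  then have "1 \<le> N" by (simp add: N_def)
  then have "0 \<le> ln N" by simp
  consider "ln N = 0" | "real T < ln N" | "0 < ln N" "ln N \<le> real T"
    using \<open>0 \<le> ln N\<close> by linarith
  then have "(\<Sum>t<T. g t \<pi>0) - (\<Sum>t<T. hedge_gain \<eta> g Pol t) \<le> 2 * sqrt (real T * ln N)"
  proof cases
    case 1
    then have "card Pol = 1" using \<open>1 \<le> N\<close> by (simp add: N_def)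
    then obtain p where "Pol = {p}" by (rule card_1_singletonE)
    with assms(2) have "Pol = {\<pi>0}" by simp
    then show ?thesis
      using 1 by (simp add: hedge_gain_def hedge_distribution_def hedge_potential_def)
  next
    case 2
    have "real T * real T \<le> real T * ln N"
      using 2 by (intro mult_left_mono) auto
    then have "real T \<le> sqrt (real T * ln N)"
      by (intro real_le_rsqrt) (simp add: power2_eq_square)
    then show ?thesis
      using hedge_regret_le_horizon[of \<pi>0 Pol T g \<eta>] assms(2,3) by simp
  next
    case 3
    then have "0 < real T" by linarith
    have "0 < \<eta>" "\<eta> \<le> 1"
      using 3 \<open>0 < real T\<close> by (simp_all add: \<eta>_def)
    have "\<eta> * real T = sqrt (real T * ln N)"
      unfolding \<eta>_def using \<open>0 < real T\<close> \<open>0 \<le> ln N\<close> by (rule sqrt_div_mul_self)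
    moreover have "\<eta>\<^sup>2 * real T = ln N"
      using \<open>0 < real T\<close> \<open>0 \<le> ln N\<close> by (simp add: \<eta>_def)
    then have "ln N / \<eta> = \<eta> * real T"
      using \<open>0 < \<eta>\<close> by (simp add: power2_eq_square field_simps)
    ultimately show ?thesis
      using hedge_regret_le[of Pol \<pi>0 T g \<eta>] assms \<open>0 < \<eta>\<close> \<open>\<eta> \<le> 1\<close> by (simp add: N_def)
  qed
  then show ?thesis by (simp add: N_def \<eta>_def)
qed

section \<open>Exponential moments of predictable deviations\<close>

definition nonanticipating :: "nat \<Rightarrow> 'z measure \<Rightarrow> (nat \<Rightarrow> (nat \<Rightarrow> 'z) \<Rightarrow> 'b) \<Rightarrow> bool" where
  "nonanticipating T P a \<longleftrightarrow> (\<forall>t<T. \<forall>zs\<in>space (PiM {..<T} (\<lambda>_. P)). \<forall>zs'\<in>space (PiM {..<T} (\<lambda>_. P)).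
      (\<forall>s<t. zs s = zs' s) \<longrightarrow> a t zs = a t zs')"

definition predictable_deviation ::
    "'z measure \<Rightarrow> ('i \<Rightarrow> 'z \<Rightarrow> real) \<Rightarrow> (nat \<Rightarrow> (nat \<Rightarrow> 'z) \<Rightarrow> 'i) \<Rightarrow> nat \<Rightarrow> (nat \<Rightarrow> 'z) \<Rightarrow> real" where
  "predictable_deviation P Y a k zs = (\<Sum>t<k. (\<integral>z. Y (a t zs) z \<partial>P) - Y (a t zs) (zs t))"

lemma predictable_deviation_measurable:
  fixes a :: "nat \<Rightarrow> (nat \<Rightarrow> 'z) \<Rightarrow> 'i::countable"
  assumes "\<forall>t<T. a t \<in> measurable (PiM {..<T} (\<lambda>_. P)) (count_space UNIV)"
    and "\<And>i. Y i \<in> borel_measurable P" and "k \<le> T"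
  shows "predictable_deviation P Y a k \<in> borel_measurable (PiM {..<T} (\<lambda>_. P))"
  unfolding predictable_deviation_def
proof (intro borel_measurable_sum borel_measurable_diff)
  fix t assume "t \<in> {..<k}"
  then have a_t: "a t \<in> measurable (PiM {..<T} (\<lambda>_. P)) (count_space UNIV)"
    using assms(1,3) by auto
  show "(\<lambda>zs. \<integral>z. Y (a t zs) z \<partial>P) \<in> borel_measurable (PiM {..<T} (\<lambda>_. P))"
    by (rule measurable_compose_countable[OF _ a_t]) simp
  have "(\<lambda>zs. Y i (zs t)) \<in> borel_measurable (PiM {..<T} (\<lambda>_. P))" for i
    using \<open>t \<in> {..<k}\<close> assms(2,3)
    by (intro measurable_compose[OF measurable_component_singleton[of t]]) auto
  then show "(\<lambda>zs. Y (a t zs) (zs t)) \<in> borel_measurable (PiM {..<T} (\<lambda>_. P))"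
    by (rule measurable_compose_countable[OF _ a_t])
qed

lemma hoeffding_mgf_centered:
  assumes "prob_space P" "0 < l" "Y \<in> borel_measurable P" "\<And>z. z \<in> space P \<Longrightarrow> 0 \<le> Y z \<and> Y z \<le> 1"
  shows "(\<integral>\<^sup>+ y. ennreal (exp (l * ((\<integral>z. Y z \<partial>P) - Y y))) \<partial>P) \<le> ennreal (exp (l\<^sup>2 / 8))"
proof -
  interpret prob_space P by (rule assms(1))
  interpret interval_bounded_random_variable P "\<lambda>z. - Y z" "-1" "0"
    using assms(3,4) by unfold_locales (auto intro!: AE_I2)
  have "(\<integral>\<^sup>+ y. ennreal (exp (l * (- Y y - expectation (\<lambda>z. - Y z)))) \<partial>P)
          \<le> ennreal (exp (l\<^sup>2 * (0 - - 1)\<^sup>2 / 8))"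
    by (rule Hoeffdings_lemma_nn_integral[OF assms(2)])
  then show ?thesis by (simp add: algebra_simps)
qed

text \<open>Conditioning on all coordinates but \<open>n\<close>: a one-step tower property.\<close>
lemma nn_integral_PiM_insert_factor_le:
  fixes F G :: "('i \<Rightarrow> 'z) \<Rightarrow> ennreal"
  assumes "prob_space P" "finite I" "n \<notin> I"
    and F: "F \<in> borel_measurable (PiM (insert n I) (\<lambda>_. P))"
    and G: "G \<in> borel_measurable (PiM (insert n I) (\<lambda>_. P))"
    and F_indep: "\<And>x y y'. x \<in> space (PiM I (\<lambda>_. P)) \<Longrightarrow> y \<in> space P \<Longrightarrow> y' \<in> space P \<Longrightarrow>
                   F (x(n := y)) = F (x(n := y'))"
    and G_le: "\<And>x. x \<in> space (PiM I (\<lambda>_. P)) \<Longrightarrow> (\<integral>\<^sup>+ y. G (x(n := y)) \<partial>P) \<le> c"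
  shows "(\<integral>\<^sup>+ z. F z * G z \<partial>PiM (insert n I) (\<lambda>_. P)) \<le> c * (\<integral>\<^sup>+ z. F z \<partial>PiM (insert n I) (\<lambda>_. P))"
proof -
  interpret prob_space P by (rule assms(1))
  interpret product_sigma_finite "\<lambda>_. P" by unfold_locales
  obtain y0 where y0: "y0 \<in> space P" using not_empty by auto
  have upd: "(\<lambda>y. x(n := y)) \<in> measurable P (PiM (insert n I) (\<lambda>_. P))"
    if "x \<in> space (PiM I (\<lambda>_. P))" for x
    using measurable_component_update[OF that assms(3)] by simp
  have upd0: "(\<lambda>x. x(n := y0)) \<in> measurable (PiM I (\<lambda>_. P)) (PiM (insert n I) (\<lambda>_. P))"
  proof (rule measurable_cong[THEN iffD1, OF _ measurable_restrict])
    show "(\<lambda>j\<in>insert n I. (x(n := y0)) j) = x(n := y0)" if "x \<in> space (PiM I (\<lambda>_. P))" for x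
      using that assms(3) by (auto simp: space_PiM PiE_def extensional_def fun_eq_iff)
  qed (use y0 in auto)
  have F_const: "(\<integral>\<^sup>+ y. F (x(n := y)) \<partial>P) = F (x(n := y0))"
    if "x \<in> space (PiM I (\<lambda>_. P))" for x
    using F_indep[OF that _ y0]
    by (simp add: nn_integral_cong[of P _ "\<lambda>_. F (x(n := y0))"] emeasure_space_1)
  have "(\<integral>\<^sup>+ z. F z * G z \<partial>PiM (insert n I) (\<lambda>_. P))
      = (\<integral>\<^sup>+ x. (\<integral>\<^sup>+ y. F (x(n := y)) * G (x(n := y)) \<partial>P) \<partial>PiM I (\<lambda>_. P))"
    using F G assms(2,3) by (intro product_nn_integral_insert) auto
  also have "\<dots> = (\<integral>\<^sup>+ x. F (x(n := y0)) * (\<integral>\<^sup>+ y. G (x(n := y)) \<partial>P) \<partial>PiM I (\<lambda>_. P))"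
  proof (rule nn_integral_cong)
    fix x assume x: "x \<in> space (PiM I (\<lambda>_. P))"
    have "(\<integral>\<^sup>+ y. F (x(n := y)) * G (x(n := y)) \<partial>P) = (\<integral>\<^sup>+ y. F (x(n := y0)) * G (x(n := y)) \<partial>P)"
      using F_indep[OF x _ y0] by (intro nn_integral_cong) simp
    also have "\<dots> = F (x(n := y0)) * (\<integral>\<^sup>+ y. G (x(n := y)) \<partial>P)"
      by (intro nn_integral_cmult measurable_compose[OF upd[OF x] G])
    finally show "(\<integral>\<^sup>+ y. F (x(n := y)) * G (x(n := y)) \<partial>P) = F (x(n := y0)) * (\<integral>\<^sup>+ y. G (x(n := y)) \<partial>P)" .
  qed
  also have "\<dots> \<le> (\<integral>\<^sup>+ x. F (x(n := y0)) * c \<partial>PiM I (\<lambda>_. P))"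
    using G_le by (intro nn_integral_mono mult_left_mono) auto
  also have "\<dots> = c * (\<integral>\<^sup>+ x. F (x(n := y0)) \<partial>PiM I (\<lambda>_. P))"
    by (subst mult.commute) (intro nn_integral_cmult measurable_compose[OF upd0 F])
  also have "(\<integral>\<^sup>+ x. F (x(n := y0)) \<partial>PiM I (\<lambda>_. P)) = (\<integral>\<^sup>+ x. (\<integral>\<^sup>+ y. F (x(n := y)) \<partial>P) \<partial>PiM I (\<lambda>_. P))"
    using F_const by (intro nn_integral_cong) simp
  also have "\<dots> = (\<integral>\<^sup>+ z. F z \<partial>PiM (insert n I) (\<lambda>_. P))"
    using F assms(2,3) by (intro product_nn_integral_insert[symmetric]) auto
  finally show ?thesis .
qed

lemma predictable_deviation_Suc:
  "predictable_deviation P Y a (Suc k) zs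
     = predictable_deviation P Y a k zs + ((\<integral>z. Y (a k zs) z \<partial>P) - Y (a k zs) (zs k))"
  by (simp add: predictable_deviation_def)

lemma nonanticipating_fun_upd:
  assumes "nonanticipating T P a" "t \<le> k" "k < T"
    and "x \<in> space (PiM ({..<T} - {k}) (\<lambda>_. P))" "y \<in> space P" "y' \<in> space P"
  shows "a t (x(k := y)) = a t (x(k := y'))"
proof -
  have "x(k := v) \<in> space (PiM {..<T} (\<lambda>_. P))" if "v \<in> space P" for v
    using assms(3,4) that PiE_fun_upd[of v "\<lambda>_. space P" k x "{..<T} - {k}"]
    by (simp add: space_PiM insert_absorb)
  moreover have "\<forall>s<t. (x(k := y)) s = (x(k := y')) s" using assms(2) by simp
  ultimately show ?thesis
    using assms(1-3,5,6) unfolding nonanticipating_def by (meson le_less_trans)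
qed

lemma predictable_deviation_fun_upd:
  assumes "nonanticipating T P a" "k < T"
    and "x \<in> space (PiM ({..<T} - {k}) (\<lambda>_. P))" "y \<in> space P" "y' \<in> space P"
  shows "predictable_deviation P Y a k (x(k := y)) = predictable_deviation P Y a k (x(k := y'))"
  unfolding predictable_deviation_def
  using nonanticipating_fun_upd[OF assms(1) _ assms(2-5)] by (intro sum.cong refl) simp

lemma predictable_deviation_mgf_nn_le:
  fixes a :: "nat \<Rightarrow> (nat \<Rightarrow> 'z) \<Rightarrow> 'i::countable"
  assumes P: "prob_space P" and "0 < l" "k \<le> T"
    and a_meas: "\<forall>t<T. a t \<in> measurable (PiM {..<T} (\<lambda>_. P)) (count_space UNIV)"
    and a_na: "nonanticipating T P a"
    and Y_meas: "\<And>i. Y i \<in> borel_measurable P"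
    and Y_bound: "\<And>i z. z \<in> space P \<Longrightarrow> 0 \<le> Y i z \<and> Y i z \<le> 1"
  shows "(\<integral>\<^sup>+ zs. ennreal (exp (l * predictable_deviation P Y a k zs)) \<partial>PiM {..<T} (\<lambda>_. P))
           \<le> ennreal (exp (l\<^sup>2 * real k / 8))"
  using \<open>k \<le> T\<close>
proof (induction k)
  case 0
  interpret prob_space "PiM {..<T} (\<lambda>_. P)" by (intro prob_space_PiM P)
  show ?case by (simp add: predictable_deviation_def emeasure_space_1)
next
  case (Suc k)
  define I where "I = {..<T} - {k}"
  have "finite I" "k \<notin> I" and PT: "PiM {..<T} (\<lambda>_. P) = PiM (insert k I) (\<lambda>_. P)"
    using Suc.prems by (auto simp: I_def insert_absorb)
  define F where "F zs = ennreal (exp (l * predictable_deviation P Y a k zs))" for zs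
  define G where "G zs = ennreal (exp (l * ((\<integral>z. Y (a k zs) z \<partial>P) - Y (a k zs) (zs k))))" for zs
  have dev_meas: "predictable_deviation P Y a j \<in> borel_measurable (PiM (insert k I) (\<lambda>_. P))"
    if "j \<le> T" for j
    unfolding PT[symmetric] using a_meas Y_meas that by (rule predictable_deviation_measurable)
  have "(\<integral>\<^sup>+ zs. ennreal (exp (l * predictable_deviation P Y a (Suc k) zs)) \<partial>PiM {..<T} (\<lambda>_. P))
        = (\<integral>\<^sup>+ zs. F zs * G zs \<partial>PiM (insert k I) (\<lambda>_. P))"
    by (simp add: PT F_def G_def predictable_deviation_Suc distrib_left exp_add ennreal_mult)
  also have "\<dots> \<le> ennreal (exp (l\<^sup>2 / 8)) * (\<integral>\<^sup>+ zs. F zs \<partial>PiM (insert k I) (\<lambda>_. P))"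
  proof (rule nn_integral_PiM_insert_factor_le[OF P \<open>finite I\<close> \<open>k \<notin> I\<close>])
    show "F \<in> borel_measurable (PiM (insert k I) (\<lambda>_. P))"
      unfolding F_def using dev_meas[of k] Suc.prems by simp
    have "G = (\<lambda>zs. ennreal (exp (l * (predictable_deviation P Y a (Suc k) zs
                                         - predictable_deviation P Y a k zs))))"
      by (simp add: fun_eq_iff G_def predictable_deviation_Suc)
    then show "G \<in> borel_measurable (PiM (insert k I) (\<lambda>_. P))"
      using dev_meas[of k] dev_meas[of "Suc k"] Suc.prems by simp
    fix x assume x: "x \<in> space (PiM I (\<lambda>_. P))"
    show "F (x(k := y)) = F (x(k := y'))" if "y \<in> space P" "y' \<in> space P" for y y'
      unfolding F_def I_def
      using predictable_deviation_fun_upd[OF a_na _ x[unfolded I_def] that] Suc.prems by simp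
    obtain y0 where y0: "y0 \<in> space P" using prob_space.not_empty[OF P] by auto
    have "(\<integral>\<^sup>+ y. G (x(k := y)) \<partial>P)
          = (\<integral>\<^sup>+ y. ennreal (exp (l * ((\<integral>z. Y (a k (x(k := y0))) z \<partial>P) - Y (a k (x(k := y0))) y))) \<partial>P)"
      using nonanticipating_fun_upd[OF a_na _ _ x[unfolded I_def] _ y0] Suc.prems
      by (intro nn_integral_cong) (simp add: G_def)
    also have "\<dots> \<le> ennreal (exp (l\<^sup>2 / 8))"
      using P \<open>0 < l\<close> Y_meas Y_bound by (rule hoeffding_mgf_centered)
    finally show "(\<integral>\<^sup>+ y. G (x(k := y)) \<partial>P) \<le> ennreal (exp (l\<^sup>2 / 8))" .
  qed
  also have "\<dots> \<le> ennreal (exp (l\<^sup>2 / 8)) * ennreal (exp (l\<^sup>2 * real k / 8))"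
    using Suc by (intro mult_left_mono) (auto simp: PT F_def)
  also have "\<dots> = ennreal (exp (l\<^sup>2 * real (Suc k) / 8))"
    by (simp add: ennreal_mult[symmetric] exp_add[symmetric] add_divide_distrib algebra_simps)
  finally show ?case .
qed

lemma predictable_deviation_mgf_le:
  fixes a :: "nat \<Rightarrow> (nat \<Rightarrow> 'z) \<Rightarrow> 'i::countable"
  assumes "prob_space P" "0 < l"
    and "\<forall>t<T. a t \<in> measurable (PiM {..<T} (\<lambda>_. P)) (count_space UNIV)"
    and "nonanticipating T P a"
    and "\<And>i. Y i \<in> borel_measurable P"
    and "\<And>i z. z \<in> space P \<Longrightarrow> 0 \<le> Y i z \<and> Y i z \<le> 1"
  shows "integrable (PiM {..<T} (\<lambda>_. P)) (\<lambda>zs. exp (l * predictable_deviation P Y a T zs))"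
    and "(\<integral>zs. exp (l * predictable_deviation P Y a T zs) \<partial>PiM {..<T} (\<lambda>_. P)) \<le> exp (l\<^sup>2 * real T / 8)"
proof -
  let ?f = "\<lambda>zs. exp (l * predictable_deviation P Y a T zs)"
  have meas: "?f \<in> borel_measurable (PiM {..<T} (\<lambda>_. P))"
    using predictable_deviation_measurable[OF assms(3,5) order_refl] by measurable
  have nn: "(\<integral>\<^sup>+ zs. ennreal (?f zs) \<partial>PiM {..<T} (\<lambda>_. P)) \<le> ennreal (exp (l\<^sup>2 * real T / 8))"
    using assms by (intro predictable_deviation_mgf_nn_le) auto
  then show int: "integrable (PiM {..<T} (\<lambda>_. P)) ?f"
    using meas by (intro integrableI_bounded) (auto simp: top.not_eq_extremum le_less_trans)
  have "ennreal (\<integral>zs. ?f zs \<partial>PiM {..<T} (\<lambda>_. P)) = (\<integral>\<^sup>+ zs. ennreal (?f zs) \<partial>PiM {..<T} (\<lambda>_. P))"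
    using int by (intro nn_integral_eq_integral[symmetric]) auto
  with nn have "ennreal (\<integral>zs. ?f zs \<partial>PiM {..<T} (\<lambda>_. P)) \<le> ennreal (exp (l\<^sup>2 * real T / 8))"
    by simp
  then show "(\<integral>zs. ?f zs \<partial>PiM {..<T} (\<lambda>_. P)) \<le> exp (l\<^sup>2 * real T / 8)"
    by (simp add: ennreal_le_iff)
qed

section \<open>Union bound through moment generating functions\<close>

lemma integral_le_if_dominated:
  fixes f g :: "'a \<Rightarrow> real"
  assumes "integrable M g" "\<And>x. x \<in> space M \<Longrightarrow> f x \<le> g x" "integral\<^sup>L M g \<le> c" "0 \<le> c"
  shows "integral\<^sup>L M f \<le> c"
proof (cases "integrable M f")
  case True
  then show ?thesis using assms(1-3) integral_mono[of M f g] by fastforce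
qed (use assms(4) in \<open>simp add: not_integrable_integral_eq\<close>)

text \<open>The maximum is at most the log-sum-exp, and \<open>ln Z \<le> ln S + Z / S - 1\<close> linearises
  the logarithm so that the bound can be integrated.\<close>
lemma scaled_le_sum_exp_bound:
  fixes d :: "'i \<Rightarrow> real"
  assumes "finite I" "i \<in> I" "0 < S"
  shows "l * d i \<le> ln S - 1 + (\<Sum>j\<in>I. exp (l * d j)) / S"
proof -
  define Z where "Z = (\<Sum>j\<in>I. exp (l * d j))"
  have "exp (l * d i) \<le> Z"
    unfolding Z_def using assms(1,2) by (intro member_le_sum) auto
  then have "0 < Z" by (rule less_le_trans[OF exp_gt_zero])
  have "ln (exp (l * d i)) \<le> ln Z"
    using \<open>exp (l * d i) \<le> Z\<close> \<open>0 < Z\<close> by (subst ln_le_cancel_iff) auto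
  then have "l * d i \<le> ln Z" by simp
  also have "\<dots> = ln S + ln (Z / S)"
    using \<open>0 < Z\<close> \<open>0 < S\<close> by (simp add: ln_div)
  also have "\<dots> \<le> ln S + (Z / S - 1)"
    using \<open>0 < Z\<close> \<open>0 < S\<close> by (intro add_left_mono ln_le_minus_one) simp
  finally show ?thesis by (simp add: Z_def)
qed

lemma integral_le_max_via_mgf:
  fixes D :: "'i \<Rightarrow> 'a \<Rightarrow> real" and f :: "'a \<Rightarrow> real"
  assumes "prob_space M" "finite I" "0 < l" "1 \<le> c" "0 \<le> b"
    and D_int: "\<And>i. i \<in> I \<Longrightarrow> integrable M (\<lambda>x. exp (l * D i x))"
    and D_mgf: "\<And>i. i \<in> I \<Longrightarrow> (\<integral>x. exp (l * D i x) \<partial>M) \<le> c"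
    and f_le: "\<And>x. x \<in> space M \<Longrightarrow> \<exists>i\<in>I. f x \<le> b + D i x"
  shows "integral\<^sup>L M f \<le> b + ln (real (card I) * c) / l"
proof -
  interpret prob_space M by (rule assms(1))
  obtain x0 where "x0 \<in> space M" using not_empty by auto
  then have "I \<noteq> {}" using f_le by blast
  define S where "S = real (card I) * c"
  have "1 \<le> real (card I)"
    using \<open>I \<noteq> {}\<close> assms(2) by (simp add: Suc_le_eq card_gt_0_iff)
  then have "1 \<le> S"
    using assms(4) mult_mono[of 1 "real (card I)" 1 c] by (simp add: S_def)
  define Z where "Z x = (\<Sum>i\<in>I. exp (l * D i x))" for x
  define B where "B x = b + (ln S - 1) / l + Z x / (l * S)" for x
  have Z_int: "integrable M Z" unfolding Z_def using D_int by auto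
  have f_le_B: "f x \<le> B x" if x: "x \<in> space M" for x
  proof -
    obtain i where "i \<in> I" "f x \<le> b + D i x" using f_le[OF x] by blast
    moreover have "l * D i x \<le> ln S - 1 + Z x / S"
      unfolding Z_def using assms(2) \<open>i \<in> I\<close> \<open>1 \<le> S\<close> by (intro scaled_le_sum_exp_bound) auto
    then have "D i x \<le> (ln S - 1) / l + Z x / (l * S)"
      using \<open>0 < l\<close> \<open>1 \<le> S\<close> by (simp add: field_simps)
    ultimately show ?thesis by (simp add: B_def)
  qed
  have B_int: "integrable M B" unfolding B_def using Z_int by auto
  have "(\<integral>x. Z x \<partial>M) \<le> S"
  proof -
    have "(\<integral>x. Z x \<partial>M) = (\<Sum>i\<in>I. \<integral>x. exp (l * D i x) \<partial>M)"
      unfolding Z_def using D_int by (intro Bochner_Integration.integral_sum) auto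
    also have "\<dots> \<le> (\<Sum>i\<in>I. c)" using D_mgf by (intro sum_mono) auto
    finally show ?thesis by (simp add: S_def)
  qed
  have B_le: "integral\<^sup>L M B \<le> b + ln S / l"
  proof -
    have "integral\<^sup>L M B = b + (ln S - 1) / l + (\<integral>x. Z x \<partial>M) / (l * S)"
      using Z_int by (simp add: B_def[abs_def] prob_space)
    also have "\<dots> \<le> b + (ln S - 1) / l + S / (l * S)"
      using \<open>(\<integral>x. Z x \<partial>M) \<le> S\<close> \<open>0 < l\<close> \<open>1 \<le> S\<close> by (intro add_left_mono divide_right_mono) auto
    also have "\<dots> = b + ln S / l"
      using \<open>0 < l\<close> \<open>1 \<le> S\<close> by (simp add: field_simps)
    finally show ?thesis .
  qed
  have "0 \<le> b + ln S / l"
    using \<open>0 \<le> b\<close> \<open>0 < l\<close> \<open>1 \<le> S\<close> by simp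
  from integral_le_if_dominated[OF B_int f_le_B B_le this] show ?thesis
    by (simp add: S_def)
qed

lemma regret_rate_bound:
  fixes x y :: real
  assumes "1 \<le> K" "1 \<le> T" "0 \<le> x" "x \<le> y"
    and y: "real T * y \<le> 2 * real K * real T * ln (real T) + real K"
  shows "1 + 2 * sqrt (real T * x) + 2 * sqrt (real T * y)
           \<le> 8 * (sqrt (real K * real T * ln (real T)) + real K)"
proof -
  define s where "s = sqrt (real K * real T * ln (real T))"
  have "0 \<le> ln (real T)" using assms(2) by simp
  have "sqrt (real T * x) \<le> sqrt (real T * y)"
    using assms(3,4) by (intro real_sqrt_le_mono mult_left_mono) auto
  moreover have "sqrt (real T * y) \<le> sqrt (2 * real K * real T * ln (real T) + real K)"
    using y by (rule real_sqrt_le_mono)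
  moreover have "\<dots> \<le> sqrt (2 * real K * real T * ln (real T)) + sqrt (real K)"
    using \<open>0 \<le> ln (real T)\<close> by (intro sqrt_add_le_add_sqrt) auto
  moreover have "sqrt (2 * real K * real T * ln (real T)) = sqrt 2 * s"
    unfolding s_def by (simp add: real_sqrt_mult[symmetric] mult.assoc)
  moreover have "sqrt 2 * s \<le> 2 * s"
    using sqrt2_less_2 \<open>0 \<le> ln (real T)\<close> by (intro mult_right_mono) (auto simp: s_def)
  moreover have "real K * 1 \<le> real K * real K"
    using assms(1) by (intro mult_left_mono) auto
  then have "sqrt (real K) \<le> real K"
    using real_sqrt_le_mono[of "real K" "(real K)\<^sup>2"] by (simp add: power2_eq_square)
  ultimately have "sqrt (real T * x) \<le> 2 * s + real K" "sqrt (real T * y) \<le> 2 * s + real K"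
    by linarith+
  moreover have "1 \<le> real K" using assms(1) by simp
  ultimately show ?thesis unfolding s_def distrib_left by linarith
qed

locale stochastic_stackelberg =
  fixes T K :: nat and A Af :: "nat set" and P :: "'z measure"
    and u :: "'z \<Rightarrow> nat \<Rightarrow> nat \<Rightarrow> real" and uf :: "nat \<Rightarrow> 'z \<Rightarrow> nat \<Rightarrow> nat \<Rightarrow> real"
    and E :: "'z \<Rightarrow> (nat \<Rightarrow> real) set" and \<delta> :: real
    and pol :: "(nat \<Rightarrow> real) \<Rightarrow> 'z \<Rightarrow> nat \<Rightarrow> real" and adv :: "nat \<Rightarrow> (nat \<Rightarrow> 'z) \<Rightarrow> nat"
  assumes K_pos: "1 \<le> K" and K_le_T: "K \<le> T"
    and finite_A: "finite A" and A_nonempty: "A \<noteq> {}"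
    and finite_Af: "finite Af" and Af_nonempty: "Af \<noteq> {}"
    and P: "prob_space P"
    and u_bound: "\<And>z a af. z \<in> space P \<Longrightarrow> a \<in> A \<Longrightarrow> af \<in> Af \<Longrightarrow> 0 \<le> u z a af \<and> u z a af \<le> 1"
    and u_meas: "\<And>a af. (\<lambda>z. u z a af) \<in> borel_measurable P"
    and uf_meas: "\<And>i a af. (\<lambda>z. uf i z a af) \<in> borel_measurable P"
    and \<delta>_le: "\<delta> \<le> 1 / real T"
    and E_mixed: "\<And>z. z \<in> space P \<Longrightarrow> E z \<subseteq> mixed_strats A"
    and E_approx: "\<And>z. z \<in> space P \<Longrightarrow> approx_extreme_points A Af uf K \<delta> z (E z)"
    and pol_in_E: "\<And>\<omega> z. \<omega> \<in> weight_grid K T \<Longrightarrow> z \<in> space P \<Longrightarrow> pol \<omega> z \<in> E z"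
    and pol_optimal: "\<And>\<omega> z x. \<omega> \<in> weight_grid K T \<Longrightarrow> z \<in> space P \<Longrightarrow> x \<in> E z \<Longrightarrow>
          (\<Sum>i<K. leader_gain A Af u uf i z x * \<omega> i)
            \<le> (\<Sum>i<K. leader_gain A Af u uf i z (pol \<omega> z) * \<omega> i)"
    and pol_meas: "\<And>\<omega> a. \<omega> \<in> weight_grid K T \<Longrightarrow> (\<lambda>z. pol \<omega> z a) \<in> borel_measurable P"
    and adv_meas: "\<forall>t<T. adv t \<in> measurable (PiM {..<T} (\<lambda>_. P)) (count_space UNIV)"
    and adv_types: "\<And>t zs. t < T \<Longrightarrow> zs \<in> space (PiM {..<T} (\<lambda>_. P)) \<Longrightarrow> adv t zs < K"
    and adv_nonanticipating: "nonanticipating T P adv"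
begin

abbreviation "PT \<equiv> PiM {..<T} (\<lambda>_. P)"
abbreviation "gain \<equiv> leader_gain A Af u uf"
abbreviation "Pol \<equiv> policy_class P K T pol"

definition freq :: "(nat \<Rightarrow> 'z) \<Rightarrow> nat \<Rightarrow> real" where
  "freq zs = type_frequencies K T (\<lambda>t. adv t zs)"

definition policy_gain :: "(nat \<Rightarrow> real) \<Rightarrow> nat \<Rightarrow> 'z \<Rightarrow> real" where
  "policy_gain \<omega> i z = gain i z (pol \<omega> z)"

definition policy_value :: "(nat \<Rightarrow> real) \<Rightarrow> nat \<Rightarrow> real" where
  "policy_value \<omega> i = (\<integral>z. policy_gain \<omega> i z \<partial>P)"

definition realized_gain :: "(nat \<Rightarrow> 'z) \<Rightarrow> nat \<Rightarrow> ('z \<Rightarrow> nat \<Rightarrow> real) \<Rightarrow> real" where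
  "realized_gain zs t \<pi> = gain (adv t zs) (zs t) (\<pi> (zs t))"

definition regret :: "(nat \<Rightarrow> 'z) \<Rightarrow> real" where
  "regret zs = benchmark P A Af u uf T (\<lambda>t. adv t zs)
     - (\<Sum>t<T. hedge_gain (sqrt (ln (real (card Pol)) / real T)) (realized_gain zs) Pol t)"

lemma T_pos: "0 < T"
  using K_pos K_le_T by simp

lemma context_in_space: "zs \<in> space PT \<Longrightarrow> t < T \<Longrightarrow> zs t \<in> space P"
  by (auto simp: space_PiM)

lemma gain_bound:
  assumes "z \<in> space P" "x \<in> mixed_strats A"
  shows "0 \<le> gain i z x \<and> gain i z x \<le> 1"
  unfolding leader_gain_def
  using assms u_bound best_resp_mem[OF finite_Af Af_nonempty, of A uf i z x]
  by (intro mixed_util_in_unit_interval) auto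

lemma pol_mixed: "\<omega> \<in> weight_grid K T \<Longrightarrow> z \<in> space P \<Longrightarrow> pol \<omega> z \<in> mixed_strats A"
  using pol_in_E E_mixed by blast

lemma gain_integrable:
  assumes "\<And>z. z \<in> space P \<Longrightarrow> \<pi> z \<in> mixed_strats A" "\<And>a. (\<lambda>z. \<pi> z a) \<in> borel_measurable P"
  shows "integrable P (\<lambda>z. gain i z (\<pi> z))"
proof -
  interpret prob_space P by (rule P)
  show ?thesis
  proof (rule integrable_const_bound[where B = 1])
    show "AE z in P. norm (gain i z (\<pi> z)) \<le> 1"
      using gain_bound assms(1) by (intro AE_I2) auto
    show "(\<lambda>z. gain i z (\<pi> z)) \<in> borel_measurable P"
      using finite_Af u_meas uf_meas assms(2) by (rule leader_gain_measurable)
  qed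
qed

lemma weighted_gain_le_pol:
  assumes "\<omega> \<in> weight_grid K T" "z \<in> space P" "x \<in> mixed_strats A"
  shows "(\<Sum>i<K. gain i z x * \<omega> i) \<le> (\<Sum>i<K. gain i z (pol \<omega> z) * \<omega> i) + max 0 \<delta>"
proof -
  have \<omega>: "\<forall>i<K. 0 \<le> \<omega> i" "(\<Sum>i<K. \<omega> i) = 1"
    using assms(1) by (auto simp: weight_grid_def)
  have "\<forall>a\<in>A. \<forall>af\<in>Af. \<bar>u z a af\<bar> \<le> 1"
    using u_bound[OF assms(2)] by (simp add: abs_le_iff)
  from approx_extreme_points_near_optimal[where u = u and z = z,
      OF finite_A finite_Af Af_nonempty this E_approx[OF assms(2)] \<omega> assms(3)]
  obtain x' where "x' \<in> E z" "(\<Sum>i<K. gain i z x * \<omega> i) \<le> (\<Sum>i<K. gain i z x' * \<omega> i) + max 0 \<delta>"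
    by blast
  with pol_optimal[OF assms(1,2)] show ?thesis by (meson add_right_mono order_trans)
qed

lemma freq_in_weight_grid: "zs \<in> space PT \<Longrightarrow> freq zs \<in> weight_grid K T"
  unfolding freq_def using adv_types T_pos by (intro type_frequencies_in_weight_grid) auto

lemma sum_rounds_eq_freq:
  "zs \<in> space PT \<Longrightarrow> (\<Sum>t<T. h (adv t zs)) = real T * (\<Sum>i<K. h i * freq zs i)"
  unfolding freq_def using adv_types T_pos by (intro sum_rounds_eq_type_frequencies) auto

lemma T_mul_max_delta_le: "real T * max 0 \<delta> \<le> 1"
proof (cases "\<delta> \<le> 0")
  case False
  then have "real T * \<delta> \<le> real T * (1 / real T)"
    using \<delta>_le by (intro mult_left_mono) auto
  then show ?thesis using False T_pos by (simp add: max_def)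
qed simp

lemma sum_gain_le_freq_policy:
  assumes zs: "zs \<in> space PT" and z: "z \<in> space P" and "x \<in> mixed_strats A"
  shows "(\<Sum>t<T. gain (adv t zs) z x) \<le> (\<Sum>t<T. policy_gain (freq zs) (adv t zs) z) + 1"
proof -
  define w where "w = freq zs"
  have w: "w \<in> weight_grid K T" unfolding w_def using zs by (rule freq_in_weight_grid)
  have "(\<Sum>t<T. gain (adv t zs) z x) = real T * (\<Sum>i<K. gain i z x * w i)"
    using zs unfolding w_def by (rule sum_rounds_eq_freq)
  also have "\<dots> \<le> real T * ((\<Sum>i<K. gain i z (pol w z) * w i) + max 0 \<delta>)"
    using weighted_gain_le_pol[OF w z assms(3)] by (intro mult_left_mono) auto
  also have "\<dots> \<le> (\<Sum>t<T. policy_gain w (adv t zs) z) + 1"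
    using sum_rounds_eq_freq[OF zs, of "\<lambda>i. gain i z (pol w z)"] T_mul_max_delta_le
    by (simp add: distrib_left w_def policy_gain_def)
  finally show ?thesis by (simp add: w_def)
qed

text \<open>Contexts are fresh in every round, so the benchmark sees the type sequence only through
  its empirical frequencies, which lie on the grid.\<close>
lemma benchmark_le_policy_value:
  assumes zs: "zs \<in> space PT"
  shows "benchmark P A Af u uf T (\<lambda>t. adv t zs) \<le> (\<Sum>t<T. policy_value (freq zs) (adv t zs)) + 1"
proof -
  interpret prob_space P by (rule P)
  have pol_int: "integrable P (policy_gain (freq zs) i)" for i
    using pol_mixed[OF freq_in_weight_grid[OF zs]] pol_meas[OF freq_in_weight_grid[OF zs]]
    unfolding policy_gain_def[abs_def] by (intro gain_integrable)
  let ?Q = "{\<pi>. (\<forall>z\<in>space P. \<pi> z \<in> mixed_strats A) \<and> (\<forall>a. (\<lambda>z. \<pi> z a) \<in> borel_measurable P)}"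
  obtain a0 where "a0 \<in> A" using A_nonempty by auto
  then have "(\<lambda>_ a. if a = a0 then 1 else 0) \<in> ?Q"
    using finite_A by (auto simp: mixed_strats_def)
  then have "?Q \<noteq> {}" by (metis empty_iff)
  moreover have "(\<Sum>t<T. \<integral>z. gain (adv t zs) z (\<pi> z) \<partial>P) \<le> (\<Sum>t<T. policy_value (freq zs) (adv t zs)) + 1"
    if "\<pi> \<in> ?Q" for \<pi>
  proof -
    have \<pi>_int: "integrable P (\<lambda>z. gain i z (\<pi> z))" for i
      using that by (intro gain_integrable) auto
    have "(\<integral>z. (\<Sum>t<T. gain (adv t zs) z (\<pi> z)) \<partial>P)
          \<le> (\<integral>z. (\<Sum>t<T. policy_gain (freq zs) (adv t zs) z) + 1 \<partial>P)"
      using \<pi>_int pol_int sum_gain_le_freq_policy[OF zs] that by (intro integral_mono) auto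
    then show ?thesis
      using \<pi>_int pol_int by (simp add: Bochner_Integration.integral_sum prob_space policy_value_def)
  qed
  ultimately show ?thesis
    unfolding benchmark_def by (rule cSUP_least)
qed

lemma finite_Pol: "finite Pol"
  unfolding policy_class_def using finite_weight_grid[OF T_pos] by simp

lemma card_Pol_le: "card Pol \<le> card (weight_grid K T)"
  unfolding policy_class_def using finite_weight_grid[OF T_pos] by (rule card_image_le)

lemma restrict_pol_in_Pol: "\<omega> \<in> weight_grid K T \<Longrightarrow> restrict (pol \<omega>) (space P) \<in> Pol"
  unfolding policy_class_def by blast

lemma realized_gain_bound:
  assumes "zs \<in> space PT" "t < T" "\<pi> \<in> Pol"
  shows "0 \<le> realized_gain zs t \<pi> \<and> realized_gain zs t \<pi> \<le> 1"
proof -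
  obtain \<omega> where "\<omega> \<in> weight_grid K T" "\<pi> = restrict (pol \<omega>) (space P)"
    using assms(3) unfolding policy_class_def by blast
  then show ?thesis
    using context_in_space[OF assms(1,2)] pol_mixed gain_bound by (simp add: realized_gain_def)
qed

lemma hedge_expected_regret_eq: "hedge_expected_regret P A Af u uf K T pol adv = (\<integral>zs. regret zs \<partial>PT)"
proof -
  have "hedge_prob A Af u uf Pol T zs (\<lambda>t. adv t zs) t \<pi>
        = hedge_distribution (sqrt (ln (real (card Pol)) / real T)) (realized_gain zs) Pol t \<pi>" for zs t \<pi>
    by (simp add: hedge_prob_def hedge_distribution_def hedge_potential_def realized_gain_def
        sum_negf Let_def)
  then show ?thesis
    by (simp add: hedge_expected_regret_def regret_def hedge_gain_def realized_gain_def Let_def)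
qed

lemma regret_le_deviation:
  assumes zs: "zs \<in> space PT"
  shows "regret zs \<le> 1 + 2 * sqrt (real T * ln (real (card Pol)))
                        + predictable_deviation P (policy_gain (freq zs)) adv T zs"
proof -
  define w where "w = freq zs"
  have w: "w \<in> weight_grid K T" unfolding w_def using zs by (rule freq_in_weight_grid)
  have realized: "realized_gain zs t (restrict (pol w) (space P)) = policy_gain w (adv t zs) (zs t)"
    if "t < T" for t
    using context_in_space[OF zs that] by (simp add: realized_gain_def policy_gain_def)
  have "(\<Sum>t<T. realized_gain zs t (restrict (pol w) (space P)))
          - (\<Sum>t<T. hedge_gain (sqrt (ln (real (card Pol)) / real T)) (realized_gain zs) Pol t)
        \<le> 2 * sqrt (real T * ln (real (card Pol)))"
    using finite_Pol restrict_pol_in_Pol[OF w] realized_gain_bound[OF zs] by (rule hedge_regret_tuned)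
  moreover have "predictable_deviation P (policy_gain w) adv T zs
      = (\<Sum>t<T. policy_value w (adv t zs)) - (\<Sum>t<T. realized_gain zs t (restrict (pol w) (space P)))"
    using realized by (simp add: predictable_deviation_def policy_value_def sum_subtractf)
  ultimately show ?thesis
    using benchmark_le_policy_value[OF zs] by (simp add: regret_def w_def)
qed

lemma policy_deviation_mgf:
  assumes "\<omega> \<in> weight_grid K T" "0 < l"
  shows "integrable PT (\<lambda>zs. exp (l * predictable_deviation P (policy_gain \<omega>) adv T zs))"
    and "(\<integral>zs. exp (l * predictable_deviation P (policy_gain \<omega>) adv T zs) \<partial>PT) \<le> exp (l\<^sup>2 * real T / 8)"
proof -
  have "policy_gain \<omega> i \<in> borel_measurable P" for i
    unfolding policy_gain_def using finite_Af u_meas uf_meas pol_meas[OF assms(1)]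
    by (rule leader_gain_measurable)
  moreover have "0 \<le> policy_gain \<omega> i z \<and> policy_gain \<omega> i z \<le> 1" if "z \<in> space P" for i z
    unfolding policy_gain_def using gain_bound pol_mixed assms(1) that by blast
  ultimately show "integrable PT (\<lambda>zs. exp (l * predictable_deviation P (policy_gain \<omega>) adv T zs))"
    "(\<integral>zs. exp (l * predictable_deviation P (policy_gain \<omega>) adv T zs) \<partial>PT) \<le> exp (l\<^sup>2 * real T / 8)"
    using predictable_deviation_mgf_le[OF P assms(2) adv_meas adv_nonanticipating] by auto
qed

lemma ln_card_Pol_bounds:
  "0 \<le> ln (real (card Pol))" "ln (real (card Pol)) \<le> ln (real (card (weight_grid K T)))"
proof -
  have "0 < card Pol"
    using finite_Pol restrict_pol_in_Pol[OF weight_grid_nonempty[OF K_pos]] by (auto simp: card_gt_0_iff)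
  then show "0 \<le> ln (real (card Pol))" "ln (real (card Pol)) \<le> ln (real (card (weight_grid K T)))"
    using card_Pol_le by simp_all
qed

theorem expected_regret_le:
  "hedge_expected_regret P A Af u uf K T pol adv \<le> 8 * (sqrt (real K * real T * ln (real T)) + real K)"
proof -
  define N where "N = real (card Pol)"
  define M where "M = real (card (weight_grid K T))"
  define Lg where "Lg = max (ln M) 1"
  define l where "l = sqrt (Lg / real T)"
  have "0 \<le> ln N" "ln N \<le> Lg" "1 \<le> Lg" "0 < M"
    using ln_card_Pol_bounds weight_grid_nonempty[OF K_pos] finite_weight_grid[OF T_pos]
    by (auto simp: N_def M_def Lg_def card_gt_0_iff)
  then have "0 < l" "l\<^sup>2 * real T = Lg" "l * real T = sqrt (real T * Lg)"
    using T_pos sqrt_div_mul_self[of "real T" Lg] by (simp_all add: l_def)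
  have "(\<integral>zs. regret zs \<partial>PT) \<le> (1 + 2 * sqrt (real T * ln N)) + ln (M * exp (l\<^sup>2 * real T / 8)) / l"
    unfolding M_def
  proof (rule integral_le_max_via_mgf[OF prob_space_PiM[OF P] finite_weight_grid[OF T_pos] \<open>0 < l\<close>])
    show "0 \<le> 1 + 2 * sqrt (real T * ln N)" using \<open>0 \<le> ln N\<close> by simp
    show "\<exists>\<omega>\<in>weight_grid K T.
            regret zs \<le> 1 + 2 * sqrt (real T * ln N) + predictable_deviation P (policy_gain \<omega>) adv T zs"
      if "zs \<in> space PT" for zs
      using regret_le_deviation[OF that] freq_in_weight_grid[OF that] by (auto simp: N_def)
  qed (use policy_deviation_mgf \<open>0 < l\<close> in auto)
  also have "ln (M * exp (l\<^sup>2 * real T / 8)) / l \<le> 2 * (l * real T)"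
    using \<open>0 < M\<close> \<open>0 < l\<close> \<open>l\<^sup>2 * real T = Lg\<close> \<open>1 \<le> Lg\<close>
    by (simp add: ln_mult divide_le_eq Lg_def power2_eq_square algebra_simps)
  also have "1 + 2 * sqrt (real T * ln N) + 2 * (l * real T)
      \<le> 8 * (sqrt (real K * real T * ln (real T)) + real K)"
    unfolding \<open>l * real T = sqrt (real T * Lg)\<close>
    using K_pos T_pos \<open>0 \<le> ln N\<close> \<open>ln N \<le> Lg\<close> weight_grid_log_bound[OF K_pos, of T]
    by (intro regret_rate_bound) (auto simp: Lg_def M_def)
  finally show ?thesis by (simp add: hedge_expected_regret_eq)
qed

end

theorem mainTheorem7:
  shows "\<exists>C::real. \<forall>(T::nat) (K::nat) (A::nat set) (Af::nat set) (d::nat)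
      (P::(nat \<Rightarrow> real) measure) u uf E (\<delta>::real) pol adv.
    (1 \<le> K \<and> K \<le> T
     \<and> finite A \<and> A \<noteq> {} \<and> finite Af \<and> Af \<noteq> {}
     \<and> prob_space P \<and> space P \<subseteq> {z. \<forall>j\<ge>d. z j = 0}
     \<and> (\<forall>z\<in>space P. \<forall>a\<in>A. \<forall>af\<in>Af. 0 \<le> u z a af \<and> u z a af \<le> 1)
     \<and> (\<forall>i<K. \<forall>z\<in>space P. \<forall>a\<in>A. \<forall>af\<in>Af. 0 \<le> uf i z a af \<and> uf i z a af \<le> 1)
     \<and> (\<forall>a af. (\<lambda>z. u z a af) \<in> borel_measurable P)
     \<and> (\<forall>i a af. (\<lambda>z. uf i z a af) \<in> borel_measurable P)
     \<and> \<delta> \<le> 1 / real T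
     \<and> (\<forall>z\<in>space P. E z \<subseteq> mixed_strats A \<and> approx_extreme_points A Af uf K \<delta> z (E z))
     \<and> (\<forall>\<omega>\<in>weight_grid K T. \<forall>z\<in>space P. pol \<omega> z \<in> E z
          \<and> (\<forall>x\<in>E z. (\<Sum>i<K. leader_gain A Af u uf i z x * \<omega> i)
                     \<le> (\<Sum>i<K. leader_gain A Af u uf i z (pol \<omega> z) * \<omega> i)))
     \<and> (\<forall>\<omega>\<in>weight_grid K T. \<forall>a. (\<lambda>z. pol \<omega> z a) \<in> borel_measurable P)
     \<and> (\<forall>t<T. adv t \<in> measurable (PiM {..<T} (\<lambda>_. P)) (count_space UNIV))
     \<and> (\<forall>t<T. \<forall>zs\<in>space (PiM {..<T} (\<lambda>_. P)). adv t zs < K)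
     \<and> (\<forall>t<T. \<forall>zs\<in>space (PiM {..<T} (\<lambda>_. P)). \<forall>zs'\<in>space (PiM {..<T} (\<lambda>_. P)).
          (\<forall>s<t. zs s = zs' s) \<longrightarrow> adv t zs = adv t zs'))
    \<longrightarrow> hedge_expected_regret P A Af u uf K T pol adv
          \<le> C * (sqrt (real K * real T * ln (real T)) + real K)"
proof (intro exI[of _ 8] allI impI, elim conjE, goal_cases)
  case (1 T K A Af d P u uf E \<delta> pol adv)
  have "stochastic_stackelberg T K A Af P u uf E \<delta> pol adv"
    unfolding stochastic_stackelberg_def nonanticipating_def
    by (intro conjI allI impI; use 1 in \<open>blast | meson\<close>)
  then show ?case by (rule stochastic_stackelberg.expected_regret_le)
qed

end
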